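(* For a bounded operator $T$ on $\ell^2(X)$ ($X$ any index set), \[\|T\|_m\le\|\Delta(|T^*|)\|^{1/2}\,\|\Delta(|T|)\|^{1/2}=\big\||T^*|\big\|_m^{1/2}\,\big\||T|\big\|_m^{1/2}.\]
   Context: $\|T\|_m$ denotes the norm of the Schur multiplier $R=[r_{ij}]\mapsto[t_{ij}r_{ij}]$ on $\mathcal B(\ell^2(X))$, where $[t_{ij}]$ is the matrix of $T$ in the standard basis. $\Delta$ is the expectation onto the diagonal (it replaces all off-diagonal matrix entries by $0$). $|T|=(T^*T)^{1/2}$. *)

theory Defs
  imports "HOL-Analysis.Analysis"
begin

text \<open>Bounded operators on l2(X), X an arbitrary index type 'x, are represented by their
matrices in the standard basis: t i j = <T e_j, e_i>.\<close>

type_synonym 'x mat = "'x \<Rightarrow> 'x \<Rightarrow> complex"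

definition l2 :: "('x \<Rightarrow> complex) set" where
  "l2 = {v. (\<lambda>i. (cmod (v i))\<^sup>2) summable_on UNIV}"

definition l2norm :: "('x \<Rightarrow> complex) \<Rightarrow> real" where
  "l2norm v = sqrt (infsum (\<lambda>i. (cmod (v i))\<^sup>2) UNIV)"

definition l2inner :: "('x \<Rightarrow> complex) \<Rightarrow> ('x \<Rightarrow> complex) \<Rightarrow> complex" where
  "l2inner u v = infsum (\<lambda>i. u i * cnj (v i)) UNIV"

definition mat_apply :: "'x mat \<Rightarrow> ('x \<Rightarrow> complex) \<Rightarrow> ('x \<Rightarrow> complex)" where
  "mat_apply t v = (\<lambda>i. infsum (\<lambda>j. t i j * v j) UNIV)"

definition bounded_mat :: "'x mat \<Rightarrow> bool" where
  "bounded_mat t \<longleftrightarrow> (\<exists>C. \<forall>v\<in>l2. (\<forall>i. (\<lambda>j. t i j * v j) summable_on UNIV)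
      \<and> mat_apply t v \<in> l2 \<and> l2norm (mat_apply t v) \<le> C * l2norm v)"

definition opnorm :: "'x mat \<Rightarrow> ennreal" where
  "opnorm t = (if bounded_mat t
     then ennreal (Sup {l2norm (mat_apply t v) | v. v \<in> l2 \<and> l2norm v \<le> 1})
     else \<infinity>)"

definition adjoint :: "'x mat \<Rightarrow> 'x mat" where
  "adjoint t = (\<lambda>i j. cnj (t j i))"

definition mat_mult :: "'x mat \<Rightarrow> 'x mat \<Rightarrow> 'x mat" where
  "mat_mult s t = (\<lambda>i k. infsum (\<lambda>j. s i j * t j k) UNIV)"

definition positive_mat :: "'x mat \<Rightarrow> bool" where
  "positive_mat s \<longleftrightarrow> bounded_mat s \<and>
     (\<forall>v\<in>l2. l2inner (mat_apply s v) v \<in> \<real> \<and> Re (l2inner (mat_apply s v) v) \<ge> 0)"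

definition mat_abs :: "'x mat \<Rightarrow> 'x mat" where
  "mat_abs t = (THE s. positive_mat s \<and> mat_mult s s = mat_mult (adjoint t) t)"

definition diag_part :: "'x mat \<Rightarrow> 'x mat" where
  "diag_part t = (\<lambda>i j. if i = j then t i j else 0)"

definition schur_prod :: "'x mat \<Rightarrow> 'x mat \<Rightarrow> 'x mat" where
  "schur_prod t r = (\<lambda>i j. t i j * r i j)"

definition schur_norm :: "'x mat \<Rightarrow> ennreal" where
  "schur_norm t = Sup {opnorm (schur_prod t r) | r. bounded_mat r \<and> opnorm r \<le> 1}"

definition ennsqrt :: "ennreal \<Rightarrow> ennreal" where
  "ennsqrt x = (if x = \<infinity> then \<infinity> else ennreal (sqrt (enn2real x)))"

end

theory Submission
  imports Defs
begin

text \<open>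
  Realise T as a bounded operator A on l2(X), let P = |A| and Q = |A*|, and fix e > 0.
  With K = (P + e)^(1/2) and G = A K^(-1) one has A = G K and, because A P = Q A,
  G G* = Q^2 (Q + e)^(-1) <= Q.  Hence t_ij = <K e_j, G* e_i> is a Gram matrix of vectors
  with |K e_j|^2 <= P_jj + e and |G* e_i|^2 <= Q_ii.  A Gram matrix t_ij = <b_j, a_i> with
  |a_i|^2 <= alpha and |b_j|^2 <= beta is a Schur multiplier of norm at most
  sqrt alpha sqrt beta: for a contraction R the bilinear form of [t_ij r_ij] at x and y is
  the sum over k of <R u_k, w_k>, where u_k = sum_j x_j (b_j)_k e_j and
  w_k = sum_i y_i (a_i)_k e_i, and Cauchy-Schwarz bounds this sum.  Letting e -> 0 proves
  the inequality.  A positive S is the Gram matrix of the columns of its square root, so its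
  Schur norm is at most the norm of its diagonal, and Schur multiplication by the identity
  gives the reverse inequality.
\<close>

lemma le_square_if_le_mult_sqrt:
  fixes S c :: real
  assumes "0 \<le> S" "0 \<le> c" "S \<le> c * sqrt S"
  shows "S \<le> c\<^sup>2"
proof -
  have "sqrt S \<le> c"
  proof (cases "S = 0")
    case False
    have "sqrt S * sqrt S \<le> c * sqrt S" using assms(1,3) by simp
    moreover have "0 < sqrt S" using assms(1) False by simp
    ultimately show ?thesis by (rule mult_right_le_imp_le)
  qed (use assms in simp)
  hence "(sqrt S)\<^sup>2 \<le> c\<^sup>2" by (intro power_mono) (simp_all add: assms(1))
  thus ?thesis using assms(1) by simp
qed

lemma summable_on_if_finite_sums_bounded:
  fixes f :: "'a \<Rightarrow> real"
  assumes "\<And>x. f x \<ge> 0" "\<And>F. finite F \<Longrightarrow> sum f F \<le> C"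
  shows "f summable_on UNIV" "infsum f UNIV \<le> C"
proof -
  show s: "f summable_on UNIV"
    by (rule nonneg_bdd_above_summable_on) (use assms in \<open>auto intro!: bdd_aboveI\<close>)
  show "infsum f UNIV \<le> C"
    by (rule infsum_le_finite_sums[OF s]) (use assms in auto)
qed

lemma sum_le_infsum_nonneg:
  fixes f :: "'a \<Rightarrow> real"
  assumes "f summable_on UNIV" "\<And>x. f x \<ge> 0" "finite F"
  shows "sum f F \<le> infsum f UNIV"
  by (rule finite_sum_le_infsum) (use assms in auto)

lemma l2_of_finite_sums_bounded:
  assumes "\<And>F. finite F \<Longrightarrow> (\<Sum>i\<in>F. (cmod (v i))\<^sup>2) \<le> C"
  shows "v \<in> l2" "infsum (\<lambda>i. (cmod (v i))\<^sup>2) UNIV \<le> C"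
  using summable_on_if_finite_sums_bounded[of "\<lambda>i. (cmod (v i))\<^sup>2" C] assms
    by (auto simp: l2_def)

lemma l2norm_nonneg: "0 \<le> l2norm v"
  by (simp add: l2norm_def infsum_nonneg)

lemma l2_add: assumes "u \<in> l2" "v \<in> l2" shows "(\<lambda>i. u i + v i) \<in> l2"
proof -
  have "(\<lambda>i. 2 * (cmod (u i))\<^sup>2 + 2 * (cmod (v i))\<^sup>2) summable_on UNIV"
    using assms by (intro summable_on_add summable_on_cmult_right) (auto simp: l2_def)
  moreover have "(cmod (u i + v i))\<^sup>2 \<le> 2 * (cmod (u i))\<^sup>2 + 2 * (cmod (v i))\<^sup>2" for i
  proof -
    have "(cmod (u i + v i))\<^sup>2 \<le> (cmod (u i) + cmod (v i))\<^sup>2"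
      by (intro power_mono norm_triangle_ineq) auto
    also have "\<dots> \<le> 2 * (cmod (u i))\<^sup>2 + 2 * (cmod (v i))\<^sup>2"
      using sum_squares_bound[of "cmod (u i)" "cmod (v i)"] by (simp add: power2_eq_square algebra_simps)
    finally show ?thesis .
  qed
  ultimately show ?thesis unfolding l2_def
    by (auto intro: summable_on_comparison_test)
qed

lemma l2_scale: assumes "u \<in> l2" shows "(\<lambda>i. c * u i) \<in> l2"
proof -
  have "(\<lambda>i. (cmod c)\<^sup>2 * (cmod (u i))\<^sup>2) summable_on UNIV"
    using assms by (intro summable_on_cmult_right) (auto simp: l2_def)
  thus ?thesis by (simp add: l2_def norm_mult power_mult_distrib)
qed

lemma l2_uminus: "u \<in> l2 \<Longrightarrow> (\<lambda>i. - u i) \<in> l2"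
  and l2_cnj: "u \<in> l2 \<Longrightarrow> (\<lambda>i. cnj (u i)) \<in> l2"
  by (simp_all add: l2_def)

lemma l2_diff: assumes "u \<in> l2" "v \<in> l2" shows "(\<lambda>i. u i - v i) \<in> l2"
  using l2_add[OF assms(1) l2_uminus[OF assms(2)]] by simp

lemma l2_prod_abs_summable:
  assumes "u \<in> l2" "v \<in> l2"
  shows "(\<lambda>i. cmod (u i) * cmod (v i)) summable_on UNIV"
proof -
  have "(\<lambda>i. (cmod (u i))\<^sup>2 + (cmod (v i))\<^sup>2) summable_on UNIV"
    using assms by (intro summable_on_add) (auto simp: l2_def)
  moreover have "cmod (u i) * cmod (v i) \<le> (cmod (u i))\<^sup>2 + (cmod (v i))\<^sup>2" for i
    using sum_squares_bound[of "cmod (u i)" "cmod (v i)", unfolded mult.assoc]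
      mult_nonneg_nonneg[OF norm_ge_zero[of "u i"] norm_ge_zero[of "v i"]] by linarith
  ultimately show ?thesis by (auto intro: summable_on_comparison_test)
qed

lemma l2_prod_summable:
  assumes "u \<in> l2" "v \<in> l2"
  shows "(\<lambda>i. u i * v i) summable_on UNIV"
  using l2_prod_abs_summable[OF assms]
  by (simp add: summable_on_iff_abs_summable_on_complex norm_mult)

lemma l2_inner_summable:
  assumes "u \<in> l2" "v \<in> l2"
  shows "(\<lambda>i. u i * cnj (v i)) summable_on UNIV"
  using l2_prod_summable[OF assms(1) l2_cnj[OF assms(2)]] .

lemma l2inner_self: assumes "u \<in> l2"
  shows "l2inner u u = complex_of_real (infsum (\<lambda>i. (cmod (u i))\<^sup>2) UNIV)"
proof -
  have "l2inner u u = infsum (\<lambda>i. complex_of_real ((cmod (u i))\<^sup>2)) UNIV"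
    unfolding l2inner_def by (rule infsum_cong) (metis complex_norm_square)
  also have "\<dots> = complex_of_real (infsum (\<lambda>i. (cmod (u i))\<^sup>2) UNIV)"
    using has_sum_of_real[OF has_sum_infsum[OF assms[unfolded l2_def, simplified]]] by (rule infsumI)
  finally show ?thesis .
qed

lemma l2inner_commute: "l2inner v u = cnj (l2inner u v)"
proof -
  have "infsum (\<lambda>i. v i * cnj (u i)) UNIV = infsum (\<lambda>i. cnj (u i * cnj (v i))) UNIV"
    by (simp add: mult.commute)
  thus ?thesis unfolding l2inner_def by (simp only: infsum_cnj)
qed

section \<open>The Hilbert space l2(X)\<close>

typedef 'x ell2 = "l2 :: ('x \<Rightarrow> complex) set"
  by (rule exI[of _ "\<lambda>_. 0"]) (simp add: l2_def)

setup_lifting type_definition_ell2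

lemma Rep_ell2_l2[simp]: "Rep_ell2 x \<in> l2"
  by (rule Rep_ell2)

lemma Rep_ell2_Abs: "v \<in> l2 \<Longrightarrow> Rep_ell2 (Abs_ell2 v) = v"
  by (rule Abs_ell2_inverse) simp

lemma ell2_eq_iff: "x = y \<longleftrightarrow> (\<forall>i. Rep_ell2 x i = Rep_ell2 y i)"
  by (metis ext Rep_ell2_inject)

text \<open>l2(X) is first made a real inner product space, with inner product Re l2inner; complex
  scaling and the complex inner product cinner are defined on top of it.\<close>

instantiation ell2 :: (type) real_inner
begin
lift_definition zero_ell2 :: "'a ell2" is "\<lambda>_. 0" by (simp add: l2_def)
lift_definition plus_ell2 :: "'a ell2 \<Rightarrow> 'a ell2 \<Rightarrow> 'a ell2" is "\<lambda>u v i. u i + v i"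
  by (rule l2_add)
lift_definition minus_ell2 :: "'a ell2 \<Rightarrow> 'a ell2 \<Rightarrow> 'a ell2" is "\<lambda>u v i. u i - v i"
  by (rule l2_diff)
lift_definition uminus_ell2 :: "'a ell2 \<Rightarrow> 'a ell2" is "\<lambda>u i. - u i"
  by (rule l2_uminus)
lift_definition scaleR_ell2 :: "real \<Rightarrow> 'a ell2 \<Rightarrow> 'a ell2" is "\<lambda>r u i. complex_of_real r * u i"
  by (rule l2_scale)
lift_definition inner_ell2 :: "'a ell2 \<Rightarrow> 'a ell2 \<Rightarrow> real" is "\<lambda>u v. Re (l2inner u v)" .
definition norm_ell2 :: "'a ell2 \<Rightarrow> real" where "norm_ell2 u = sqrt (inner u u)"
definition sgn_ell2 :: "'a ell2 \<Rightarrow> 'a ell2" where "sgn_ell2 u = inverse (norm u) *\<^sub>R u"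
definition dist_ell2 :: "'a ell2 \<Rightarrow> 'a ell2 \<Rightarrow> real" where "dist_ell2 u v = norm (u - v)"
definition uniformity_ell2 :: "('a ell2 \<times> 'a ell2) filter" where
  "uniformity_ell2 = (INF e\<in>{0<..}. principal {(x, y). dist x y < e})"
definition open_ell2 :: "'a ell2 set \<Rightarrow> bool" where
  "open_ell2 U = (\<forall>x\<in>U. \<forall>\<^sub>F (x', y) in uniformity. x' = x \<longrightarrow> y \<in> U)"

instance
proof
  fix x y z :: "'a ell2" and a b :: real
  show "x + y + z = x + (y + z)" by transfer (simp add: add.assoc)
  show "x + y = y + x" by transfer (simp add: add.commute)
  show "0 + x = x" by transfer simp
  show "- x + x = 0" by transfer simp
  show "x - y = x + - y" by transfer simp
  show "a *\<^sub>R (x + y) = a *\<^sub>R x + a *\<^sub>R y" by transfer (simp add: algebra_simps)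
  show "(a + b) *\<^sub>R x = a *\<^sub>R x + b *\<^sub>R x" by transfer (simp add: algebra_simps)
  show "a *\<^sub>R b *\<^sub>R x = (a * b) *\<^sub>R x" by transfer (simp add: algebra_simps)
  show "1 *\<^sub>R x = x" by transfer simp
  show "sgn x = inverse (norm x) *\<^sub>R x" by (simp add: sgn_ell2_def)
  show "dist x y = norm (x - y)" by (simp add: dist_ell2_def)
  show "inner x y = inner y x"
    by transfer (subst l2inner_commute, simp)
  show "inner (x + y) z = inner x z + inner y z"
    by transfer (simp add: l2inner_def distrib_right infsum_add l2_inner_summable)
  show "inner (a *\<^sub>R x) y = a * inner x y"
    by transfer (simp add: l2inner_def mult.assoc infsum_cmult_right')
  show "0 \<le> inner x x"
    by transfer (simp add: l2inner_self infsum_nonneg)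
  show "(inner x x = 0) = (x = 0)"
  proof transfer
    fix x :: "'a \<Rightarrow> complex" assume x: "x \<in> l2"
    have "Re (l2inner x x) = 0 \<longleftrightarrow> (\<forall>i. x i = 0)"
    proof
      assume "Re (l2inner x x) = 0"
      hence "infsum (\<lambda>i. (cmod (x i))\<^sup>2) UNIV \<le> 0" by (simp add: l2inner_self x)
      hence "(cmod (x i))\<^sup>2 = 0" for i
        using nonneg_infsum_le_0D[of "\<lambda>i. (cmod (x i))\<^sup>2" UNIV i] x by (simp add: l2_def)
      thus "\<forall>i. x i = 0" by simp
    qed (simp add: l2inner_def)
    thus "(Re (l2inner x x) = 0) = (x = (\<lambda>_. 0))" by auto
  qed
  show "norm x = sqrt (inner x x)" by (simp add: norm_ell2_def)
qed (simp_all add: uniformity_ell2_def open_ell2_def)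
end

lemma Rep_ell2_simps[simp]:
  "Rep_ell2 (x + y) i = Rep_ell2 x i + Rep_ell2 y i"
  "Rep_ell2 (x - y) i = Rep_ell2 x i - Rep_ell2 y i"
  "Rep_ell2 (- x) i = - Rep_ell2 x i"
  "Rep_ell2 (r *\<^sub>R x) i = complex_of_real r * Rep_ell2 x i"
  "Rep_ell2 0 i = 0"
  by (transfer, simp)+

lemma norm_ell2_sq: "(norm x)\<^sup>2 = infsum (\<lambda>i. (cmod (Rep_ell2 x i))\<^sup>2) UNIV"
  by (simp add: norm_eq_sqrt_inner inner_ell2.rep_eq l2inner_self infsum_nonneg)

lemma sum_le_norm_sq: "finite F \<Longrightarrow> (\<Sum>i\<in>F. (cmod (Rep_ell2 x i))\<^sup>2) \<le> (norm x)\<^sup>2"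
  unfolding norm_ell2_sq
    by (rule sum_le_infsum_nonneg) (use Rep_ell2_l2[of x] in \<open>auto simp: l2_def\<close>)

lemma coord_le_norm: "cmod (Rep_ell2 x i) \<le> norm x"
proof -
  have "(cmod (Rep_ell2 x i))\<^sup>2 \<le> (norm x)\<^sup>2" using sum_le_norm_sq[of "{i}" x] by simp
  thus ?thesis by (simp add: power2_le_iff_abs_le)
qed

lemma bounded_linear_Rep_ell2[simp]: "bounded_linear (\<lambda>x. Rep_ell2 x i)"
  by (rule bounded_linear_intro[of _ 1]) (auto simp: coord_le_norm scaleR_conv_of_real)

lemma Cauchy_ell2_coordinatewise_limit:
  fixes X :: "nat \<Rightarrow> 'a ell2"
  assumes C: "Cauchy X" and lim: "\<And>i. (\<lambda>n. Rep_ell2 (X n) i) \<longlonglongrightarrow> f i" and "e > 0"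
  shows "\<exists>N. \<forall>n\<ge>N. (\<lambda>i. Rep_ell2 (X n) i - f i) \<in> l2 \<and>
      infsum (\<lambda>i. (cmod (Rep_ell2 (X n) i - f i))\<^sup>2) UNIV \<le> e\<^sup>2"
proof -
  obtain N where N: "\<And>m n. m \<ge> N \<Longrightarrow> n \<ge> N \<Longrightarrow> dist (X m) (X n) < e"
    using metric_CauchyD[OF C \<open>e > 0\<close>] by blast
  have "(\<Sum>i\<in>F. (cmod (Rep_ell2 (X n) i - f i))\<^sup>2) \<le> e\<^sup>2" if "n \<ge> N" "finite F" for n F
  proof (rule tendsto_le[OF trivial_limit_sequentially])
    show "(\<lambda>m. \<Sum>i\<in>F. (cmod (Rep_ell2 (X n) i - Rep_ell2 (X m) i))\<^sup>2)
        \<longlonglongrightarrow> (\<Sum>i\<in>F. (cmod (Rep_ell2 (X n) i - f i))\<^sup>2)"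
      by (intro tendsto_intros lim)
    have "(\<Sum>i\<in>F. (cmod (Rep_ell2 (X n) i - Rep_ell2 (X m) i))\<^sup>2) \<le> e\<^sup>2" if "m \<ge> N" for m
    proof -
      have "(\<Sum>i\<in>F. (cmod (Rep_ell2 (X n) i - Rep_ell2 (X m) i))\<^sup>2) \<le> (norm (X n - X m))\<^sup>2"
        using sum_le_norm_sq[OF \<open>finite F\<close>, of "X n - X m"] by simp
      also have "\<dots> \<le> e\<^sup>2"
        using N[OF \<open>n \<ge> N\<close> that] by (intro power_mono) (auto simp: dist_norm)
      finally show ?thesis .
    qed
    thus "\<forall>\<^sub>F m in sequentially. (\<Sum>i\<in>F. (cmod (Rep_ell2 (X n) i - Rep_ell2 (X m) i))\<^sup>2) \<le> e\<^sup>2"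
      unfolding eventually_sequentially by blast
  qed simp
  hence "(\<lambda>i. Rep_ell2 (X n) i - f i) \<in> l2 \<and> infsum (\<lambda>i. (cmod (Rep_ell2 (X n) i - f i))\<^sup>2) UNIV \<le> e\<^sup>2"
    if n: "n \<ge> N" for n
    using l2_of_finite_sums_bounded[of "\<lambda>i. Rep_ell2 (X n) i - f i" "e\<^sup>2"] n by blast
  thus ?thesis by blast
qed

instance ell2 :: (type) complete_space
proof
  fix X :: "nat \<Rightarrow> 'a ell2" assume C: "Cauchy X"
  define f where "f i = lim (\<lambda>n. Rep_ell2 (X n) i)" for i
  have lim: "(\<lambda>n. Rep_ell2 (X n) i) \<longlonglongrightarrow> f i" for i
    unfolding f_def using Cauchy_convergent[OF bounded_linear.Cauchy[OF bounded_linear_Rep_ell2 C]]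
    by (rule convergent_LIMSEQ_iff[THEN iffD1])
  have f: "f \<in> l2"
  proof -
    obtain N where "(\<lambda>i. Rep_ell2 (X N) i - f i) \<in> l2"
      using Cauchy_ell2_coordinatewise_limit[OF C lim zero_less_one] by blast
    from l2_diff[OF Rep_ell2_l2[of "X N"] this] show ?thesis by simp
  qed
  have "X \<longlonglongrightarrow> Abs_ell2 f"
  proof (rule metric_LIMSEQ_I)
    fix e :: real assume "e > 0"
    then obtain N where N: "\<forall>n\<ge>N. (\<lambda>i. Rep_ell2 (X n) i - f i) \<in> l2 \<and>
        infsum (\<lambda>i. (cmod (Rep_ell2 (X n) i - f i))\<^sup>2) UNIV \<le> (e/2)\<^sup>2"
      using Cauchy_ell2_coordinatewise_limit[OF C lim half_gt_zero] by blast
    have "dist (X n) (Abs_ell2 f) < e" if "n \<ge> N" for n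
    proof -
      have "(dist (X n) (Abs_ell2 f))\<^sup>2 \<le> (e/2)\<^sup>2"
        using N that by (simp add: dist_norm norm_ell2_sq Rep_ell2_Abs f)
      hence "dist (X n) (Abs_ell2 f) \<le> e/2"
        using \<open>e > 0\<close> by (simp add: power2_le_iff_abs_le)
      thus ?thesis using \<open>e > 0\<close> by simp
    qed
    thus "\<exists>N. \<forall>n\<ge>N. dist (X n) (Abs_ell2 f) < e" by blast
  qed
  thus "convergent X" by (rule convergentI)
qed

lift_definition cscale :: "complex \<Rightarrow> 'x ell2 \<Rightarrow> 'x ell2" (infixr \<open>*\<^sub>C\<close> 75) is "\<lambda>c u i. c * u i"
  by (rule l2_scale)

lift_definition cinner :: "'x ell2 \<Rightarrow> 'x ell2 \<Rightarrow> complex" is l2inner .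

lemma Rep_ell2_cscale[simp]: "Rep_ell2 (c *\<^sub>C x) i = c * Rep_ell2 x i"
  by transfer simp

lemma Rep_ell2_sum: "Rep_ell2 (sum f F) i = (\<Sum>j\<in>F. Rep_ell2 (f j) i)"
  by (induction F rule: infinite_finite_induct) auto

lemma cscale_add_right: "c *\<^sub>C (x + y) = c *\<^sub>C x + c *\<^sub>C y"
  and cscale_cscale[simp]: "a *\<^sub>C b *\<^sub>C x = (a * b) *\<^sub>C x"
  and cscale_one[simp]: "1 *\<^sub>C x = x"
  and cscale_zero_right[simp]: "c *\<^sub>C 0 = 0"
  and cscale_zero_left[simp]: "0 *\<^sub>C x = 0"
  and cscale_minus_right: "c *\<^sub>C (- x) = - (c *\<^sub>C x)"
  and cscale_diff_right: "c *\<^sub>C (x - y) = c *\<^sub>C x - c *\<^sub>C y"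
  and scaleR_cscale: "r *\<^sub>R x = complex_of_real r *\<^sub>C x"
  and cscale_scaleR: "c *\<^sub>C (r *\<^sub>R x) = r *\<^sub>R (c *\<^sub>C x)"
  by (auto simp: ell2_eq_iff algebra_simps)

lemma norm_cscale[simp]: "norm (c *\<^sub>C x) = cmod c * norm x"
proof -
  have "(norm (c *\<^sub>C x))\<^sup>2 = infsum (\<lambda>i. (cmod c)\<^sup>2 * (cmod (Rep_ell2 x i))\<^sup>2) UNIV"
    by (simp add: norm_ell2_sq norm_mult power_mult_distrib)
  also have "\<dots> = (cmod c)\<^sup>2 * (norm x)\<^sup>2"
    by (simp add: norm_ell2_sq infsum_cmult_right')
  finally have "(norm (c *\<^sub>C x))\<^sup>2 = (cmod c * norm x)\<^sup>2"
    by (simp add: power_mult_distrib)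
  thus ?thesis by (simp add: power2_eq_iff_nonneg)
qed

lemma bounded_linear_cscale[simp]: "bounded_linear (cscale c)"
  by (rule bounded_linear_intro[of _ "cmod c"]) (auto simp: cscale_add_right cscale_scaleR)

lemma cinner_add_left: "cinner (x + y) z = cinner x z + cinner y z"
  by transfer (simp add: l2inner_def distrib_right infsum_add l2_inner_summable)

lemma cinner_add_right: "cinner x (y + z) = cinner x y + cinner x z"
  by transfer (simp add: l2inner_def distrib_left infsum_add l2_inner_summable)

lemma cinner_cscale_left[simp]: "cinner (c *\<^sub>C x) y = c * cinner x y"
  by transfer (simp add: l2inner_def mult.assoc infsum_cmult_right')

lemma cinner_cscale_right[simp]: "cinner x (c *\<^sub>C y) = cnj c * cinner x y"
proof transfer
  fix x y :: "'a \<Rightarrow> complex" and c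
  have "(\<lambda>i. x i * cnj (c * y i)) = (\<lambda>i. cnj c * (x i * cnj (y i)))"
    by (auto simp: algebra_simps)
  thus "l2inner x (\<lambda>i. c * y i) = cnj c * l2inner x y" unfolding l2inner_def
    by (simp only: infsum_cmult_right')
qed

lemma cinner_commute: "cinner y x = cnj (cinner x y)"
  by transfer (rule l2inner_commute)

lemma Re_cinner: "Re (cinner x y) = inner x y"
  by transfer simp

lemma cinner_self: "cinner x x = complex_of_real ((norm x)\<^sup>2)"
  by (simp add: cinner.rep_eq l2inner_self norm_ell2_sq)

lemma cinner_zero_left[simp]: "cinner 0 y = 0" and cinner_zero_right[simp]: "cinner x 0 = 0"
  by (transfer, simp add: l2inner_def)+

lemma cinner_minus_left[simp]: "cinner (- x) y = - cinner x y"
  by transfer (simp add: l2inner_def infsum_uminus)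

lemma cinner_minus_right[simp]: "cinner x (- y) = - cinner x y"
  by transfer (simp add: l2inner_def infsum_uminus)

lemma cinner_diff_left: "cinner (x - y) z = cinner x z - cinner y z"
  using cinner_add_left[of x "- y" z] by simp

lemma cinner_diff_right: "cinner x (y - z) = cinner x y - cinner x z"
  using cinner_add_right[of x y "- z"] by simp

lemma cinner_scaleR_left[simp]: "cinner (r *\<^sub>R x) y = complex_of_real r * cinner x y"
  by (simp add: scaleR_cscale)

lemma cinner_scaleR_right[simp]: "cinner x (r *\<^sub>R y) = complex_of_real r * cinner x y"
  by (simp add: scaleR_cscale)

lemma cinner_sum_left: "cinner (sum f F) y = (\<Sum>j\<in>F. cinner (f j) y)"
  by (induction F rule: infinite_finite_induct) (auto simp: cinner_add_left)

lemma cinner_sum_right: "cinner y (sum f F) = (\<Sum>j\<in>F. cinner y (f j))"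
  by (induction F rule: infinite_finite_induct) (auto simp: cinner_add_right)

lemma cinner_cauchy_schwarz: "cmod (cinner x y) \<le> norm x * norm y"
proof (cases "cinner x y = 0")
  case False
  define w where "w = cinner x y"
  have "(cmod w)\<^sup>2 = Re (cnj w * w)"
    by (metis complex_norm_square mult.commute Re_complex_of_real)
  also have "\<dots> = Re (cinner (cnj w *\<^sub>C x) y)" by (simp add: w_def)
  also have "\<dots> = inner (cnj w *\<^sub>C x) y" by (rule Re_cinner)
  also have "\<dots> \<le> norm (cnj w *\<^sub>C x) * norm y" by (rule norm_cauchy_schwarz)
  also have "\<dots> = cmod w * (norm x * norm y)" by simp
  finally have "cmod w * cmod w \<le> cmod w * (norm x * norm y)" by (simp add: power2_eq_square)
  moreover have "cmod w > 0" using False w_def by simp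
  ultimately show ?thesis unfolding w_def by simp
qed simp

lemma bounded_linear_cinner_left[simp]: "bounded_linear (\<lambda>x. cinner x y)"
  by (rule bounded_linear_intro[of _ "norm y"])
     (auto simp: cinner_add_left cinner_cauchy_schwarz mult.commute scaleR_conv_of_real)

lemma cinner_eq_zero_iff: "cinner x x = 0 \<longleftrightarrow> x = 0"
  by (simp add: cinner_self)

lemma ell2_eqI_cinner: "(\<And>z. cinner x z = cinner y z) \<Longrightarrow> x = y"
  by (metis cinner_diff_left cinner_eq_zero_iff eq_iff_diff_eq_0)

lift_definition ket :: "'x \<Rightarrow> 'x ell2" is "\<lambda>j i. if i = j then 1 else 0"
proof -
  fix j :: 'x
  show "(\<lambda>i. if i = j then 1 else 0 :: complex) \<in> l2"
    unfolding l2_def mem_Collect_eq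
    by (rule finite_nonzero_values_imp_summable_on, rule finite_subset[of _ "{j}"]) auto
qed

lemma Rep_ell2_ket: "Rep_ell2 (ket j) i = (if i = j then 1 else 0)"
  by transfer simp

lemma cinner_ket_right[simp]: "cinner x (ket j) = Rep_ell2 x j"
proof -
  have "((\<lambda>i. Rep_ell2 x i * cnj (Rep_ell2 (ket j) i)) has_sum (\<Sum>i\<in>{j}. Rep_ell2 x i * cnj (Rep_ell2 (ket j) i))) UNIV"
    by (rule has_sum_finite_neutralI[of "{j}"]) (auto simp: Rep_ell2_ket)
  thus ?thesis by (simp add: cinner.rep_eq l2inner_def Rep_ell2_ket infsumI)
qed

lemma norm_ket[simp]: "norm (ket j) = 1"
proof -
  have "Re (cinner (ket j) (ket j)) = (norm (ket j))\<^sup>2"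
    by (simp only: cinner_self Re_complex_of_real)
  moreover have "Re (cinner (ket j) (ket j)) = 1" by (simp add: Rep_ell2_ket)
  ultimately have "(norm (ket j))\<^sup>2 = 1" by simp
  thus ?thesis by (metis real_sqrt_abs abs_norm_cancel real_sqrt_one)
qed

lemma Rep_ell2_sum_ket:
  assumes "finite F"
  shows "Rep_ell2 (\<Sum>k\<in>F. u k *\<^sub>C ket k) i = (if i \<in> F then u i else 0)"
  using assms by (simp add: Rep_ell2_sum Rep_ell2_ket if_distrib sum.delta cong: if_cong)

lemma norm_sum_ket_sq:
  assumes "finite F"
  shows "(norm (\<Sum>k\<in>F. u k *\<^sub>C ket k))\<^sup>2 = (\<Sum>k\<in>F. (cmod (u k))\<^sup>2)"
proof -
  have "((\<lambda>i. (cmod (Rep_ell2 (\<Sum>k\<in>F. u k *\<^sub>C ket k) i))\<^sup>2) has_sum (\<Sum>k\<in>F. (cmod (u k))\<^sup>2)) UNIV"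
    by (rule has_sum_finite_neutralI[OF assms]) (auto simp: Rep_ell2_sum_ket[OF assms])
  thus ?thesis by (simp add: norm_ell2_sq infsumI)
qed

lemma norm_diff_partial_expansion_sq:
  assumes F: "finite F"
  shows "(norm (v - (\<Sum>j\<in>F. Rep_ell2 v j *\<^sub>C ket j)))\<^sup>2 = (norm v)\<^sup>2 - (\<Sum>i\<in>F. (cmod (Rep_ell2 v i))\<^sup>2)"
proof -
  let ?r = "v - (\<Sum>j\<in>F. Rep_ell2 v j *\<^sub>C ket j)"
  have in_F: "((\<lambda>i. if i \<in> F then (cmod (Rep_ell2 v i))\<^sup>2 else 0) has_sum (\<Sum>i\<in>F. (cmod (Rep_ell2 v i))\<^sup>2)) UNIV"
    by (rule has_sum_finite_neutralI[OF F]) auto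
  have coord_split: "(cmod (Rep_ell2 v i))\<^sup>2 = (cmod (Rep_ell2 ?r i))\<^sup>2 + (if i \<in> F then (cmod (Rep_ell2 v i))\<^sup>2 else 0)" for i
    by (simp add: Rep_ell2_sum_ket[OF F])
  have "(norm v)\<^sup>2 = infsum (\<lambda>i. (cmod (Rep_ell2 ?r i))\<^sup>2 + (if i \<in> F then (cmod (Rep_ell2 v i))\<^sup>2 else 0)) UNIV"
    by (simp only: norm_ell2_sq coord_split[symmetric])
  also have "\<dots> = (norm ?r)\<^sup>2 + (\<Sum>i\<in>F. (cmod (Rep_ell2 v i))\<^sup>2)"
    unfolding norm_ell2_sq using Rep_ell2_l2[of ?r] has_sum_imp_summable[OF in_F] infsumI[OF in_F]
    by (subst infsum_add) (auto simp: l2_def)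
  finally show ?thesis by simp
qed

lemma ell2_expansion: "((\<lambda>j. Rep_ell2 v j *\<^sub>C ket j) has_sum v) UNIV"
proof -
  let ?d = "\<lambda>F. sqrt ((norm v)\<^sup>2 - (\<Sum>i\<in>F. (cmod (Rep_ell2 v i))\<^sup>2))"
  have "((\<lambda>i. (cmod (Rep_ell2 v i))\<^sup>2) has_sum (norm v)\<^sup>2) UNIV"
    using Rep_ell2_l2[of v] by (simp add: norm_ell2_sq l2_def)
  hence "((\<lambda>F. \<Sum>i\<in>F. (cmod (Rep_ell2 v i))\<^sup>2) \<longlongrightarrow> (norm v)\<^sup>2) (finite_subsets_at_top UNIV)"
    by (simp add: has_sum_def)
  hence "(?d \<longlongrightarrow> sqrt ((norm v)\<^sup>2 - (norm v)\<^sup>2)) (finite_subsets_at_top UNIV)"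
    by (intro tendsto_intros)
  hence "(?d \<longlongrightarrow> 0) (finite_subsets_at_top UNIV)"
    by simp
  moreover have "\<forall>\<^sub>F F in finite_subsets_at_top UNIV. ?d F = norm ((\<Sum>j\<in>F. Rep_ell2 v j *\<^sub>C ket j) - v)"
    by (rule eventually_finite_subsets_at_top_weakI)
       (simp add: norm_diff_partial_expansion_sq[symmetric] norm_minus_commute)
  ultimately have "((\<lambda>F. norm ((\<Sum>j\<in>F. Rep_ell2 v j *\<^sub>C ket j) - v)) \<longlongrightarrow> 0) (finite_subsets_at_top UNIV)"
    by (rule Lim_transform_eventually)
  thus ?thesis
    by (simp add: has_sum_def tendsto_norm_zero_iff LIM_zero_iff)
qed

section \<open>Bounded complex-linear operators\<close>

instance ell2 :: (type) banach ..

typedef 'x bop = "{A :: 'x ell2 \<Rightarrow>\<^sub>L 'x ell2. \<forall>c v. blinfun_apply A (c *\<^sub>C v) = c *\<^sub>C blinfun_apply A v}"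
  by (rule exI[of _ 0]) simp

setup_lifting type_definition_bop

definition bop_apply :: "'x bop \<Rightarrow> 'x ell2 \<Rightarrow> 'x ell2" where "bop_apply A = blinfun_apply (Rep_bop A)"

lemma bop_eqI: "(\<And>v. bop_apply A v = bop_apply B v) \<Longrightarrow> A = B"
  unfolding bop_apply_def by (metis blinfun_eqI Rep_bop_inject)

lemma Rep_bop_cscale: "blinfun_apply (Rep_bop A) (c *\<^sub>C v) = c *\<^sub>C blinfun_apply (Rep_bop A) v"
  using Rep_bop[of A] by simp

lemma bop_apply_cscale[simp]: "bop_apply A (c *\<^sub>C v) = c *\<^sub>C bop_apply A v"
  by (simp add: bop_apply_def Rep_bop_cscale)

lemma bounded_linear_bop_apply[simp]: "bounded_linear (bop_apply A)"
  by (simp add: bop_apply_def blinfun.bounded_linear_right)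

lemma bop_apply_linear[simp]:
  "bop_apply A (x + y) = bop_apply A x + bop_apply A y"
  "bop_apply A (x - y) = bop_apply A x - bop_apply A y"
  "bop_apply A (- x) = - bop_apply A x"
  "bop_apply A (r *\<^sub>R x) = r *\<^sub>R bop_apply A x"
  "bop_apply A 0 = 0"
  using bounded_linear_bop_apply[of A] by (simp_all add: linear_simps)

instantiation bop :: (type) real_normed_algebra_1
begin

lift_definition zero_bop :: "'a bop" is 0 by simp
lift_definition one_bop :: "'a bop" is id_blinfun by simp
lift_definition plus_bop :: "'a bop \<Rightarrow> 'a bop \<Rightarrow> 'a bop" is "(+)"
  by (simp add: blinfun.add_left cscale_add_right)
lift_definition minus_bop :: "'a bop \<Rightarrow> 'a bop \<Rightarrow> 'a bop" is "(-)"
  by (simp add: blinfun.diff_left cscale_diff_right)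
lift_definition uminus_bop :: "'a bop \<Rightarrow> 'a bop" is "uminus"
  by (simp add: blinfun.minus_left cscale_minus_right)
lift_definition scaleR_bop :: "real \<Rightarrow> 'a bop \<Rightarrow> 'a bop" is "scaleR"
  by (simp add: blinfun.scaleR_left cscale_scaleR)
lift_definition times_bop :: "'a bop \<Rightarrow> 'a bop \<Rightarrow> 'a bop" is "(o\<^sub>L)"
  by simp
lift_definition norm_bop :: "'a bop \<Rightarrow> real" is norm .
definition sgn_bop :: "'a bop \<Rightarrow> 'a bop" where "sgn_bop A = inverse (norm A) *\<^sub>R A"
definition dist_bop :: "'a bop \<Rightarrow> 'a bop \<Rightarrow> real" where "dist_bop A B = norm (A - B)"
definition uniformity_bop :: "('a bop \<times> 'a bop) filter" where
  "uniformity_bop = (INF e\<in>{0<..}. principal {(x, y). dist x y < e})"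
definition open_bop :: "'a bop set \<Rightarrow> bool" where
  "open_bop U = (\<forall>x\<in>U. \<forall>\<^sub>F (x', y) in uniformity. x' = x \<longrightarrow> y \<in> U)"

lemma bop_apply_simps[simp]:
  "bop_apply 0 v = 0"
  "bop_apply 1 v = v"
  "bop_apply (A + B) v = bop_apply A v + bop_apply B v"
  "bop_apply (A - B) v = bop_apply A v - bop_apply B v"
  "bop_apply (- A) v = - bop_apply A v"
  "bop_apply (r *\<^sub>R A) v = r *\<^sub>R bop_apply A v"
  "bop_apply (A * B) v = bop_apply A (bop_apply B v)"
  by (simp_all add: bop_apply_def zero_bop.rep_eq one_bop.rep_eq plus_bop.rep_eq minus_bop.rep_eq
      uminus_bop.rep_eq scaleR_bop.rep_eq times_bop.rep_eq blinfun.bilinear_simps)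

instance
proof
  fix A B C :: "'a bop" and a b :: real
  show "A + B + C = A + (B + C)" by (rule bop_eqI) (simp add: add.assoc)
  show "A + B = B + A" by (rule bop_eqI) (simp add: add.commute)
  show "0 + A = A" by (rule bop_eqI) simp
  show "- A + A = 0" by (rule bop_eqI) simp
  show "A - B = A + - B" by (rule bop_eqI) simp
  show "a *\<^sub>R (A + B) = a *\<^sub>R A + a *\<^sub>R B"
    by (rule bop_eqI) (simp add: scaleR_add_right)
  show "(a + b) *\<^sub>R A = a *\<^sub>R A + b *\<^sub>R A"
    by (rule bop_eqI) (simp add: scaleR_add_left)
  show "a *\<^sub>R b *\<^sub>R A = (a * b) *\<^sub>R A" by (rule bop_eqI) simp
  show "1 *\<^sub>R A = A" by (rule bop_eqI) simp
  show "A * B * C = A * (B * C)" by (rule bop_eqI) simp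
  show "(A + B) * C = A * C + B * C" by (rule bop_eqI) simp
  show "A * (B + C) = A * B + A * C" by (rule bop_eqI) simp
  show "1 * A = A" by (rule bop_eqI) simp
  show "A * 1 = A" by (rule bop_eqI) simp
  show "a *\<^sub>R A * B = a *\<^sub>R (A * B)" by (rule bop_eqI) simp
  show "A * a *\<^sub>R B = a *\<^sub>R (A * B)" by (rule bop_eqI) simp
  show "(0::'a bop) \<noteq> 1"
  proof
    assume "(0::'a bop) = 1"
    hence "bop_apply (0::'a bop) (ket undefined) = bop_apply 1 (ket undefined)" by simp
    hence "ket (undefined::'a) = 0" by simp
    thus False using norm_ket[of "undefined::'a"] by simp
  qed
  show "sgn A = inverse (norm A) *\<^sub>R A" by (simp add: sgn_bop_def)
  show "dist A B = norm (A - B)" by (simp add: dist_bop_def)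
  show "norm A = 0 \<longleftrightarrow> A = 0"
    by (metis norm_bop.rep_eq norm_eq_zero zero_bop.rep_eq Rep_bop_inject)
  show "norm (A + B) \<le> norm A + norm B"
    by (simp add: norm_bop.rep_eq plus_bop.rep_eq norm_triangle_ineq)
  show "norm (a *\<^sub>R A) = \<bar>a\<bar> * norm A" by (simp add: norm_bop.rep_eq scaleR_bop.rep_eq)
  show "norm (A * B) \<le> norm A * norm B"
    by (simp add: norm_bop.rep_eq times_bop.rep_eq norm_blinfun_compose)
  show "norm (1::'a bop) = 1"
    unfolding norm_bop.rep_eq one_bop.rep_eq
    by (rule norm_blinfun_eqI[where x="ket undefined"]) auto
  show "uniformity = (INF e\<in>{0<..}. principal {(x, y). dist (x::'a bop) y < e})"
    by (simp add: uniformity_bop_def)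
  show "open U = (\<forall>x\<in>U. \<forall>\<^sub>F (x', y) in uniformity. x' = x \<longrightarrow> y \<in> U)" for U :: "'a bop set"
    by (simp add: open_bop_def)
qed
end

lemma norm_bop_apply: "norm (bop_apply A v) \<le> norm A * norm v"
  unfolding bop_apply_def norm_bop.rep_eq by (rule norm_blinfun)

lemma norm_bop_bound: "0 \<le> b \<Longrightarrow> (\<And>v. norm (bop_apply A v) \<le> b * norm v) \<Longrightarrow> norm A \<le> b"
  unfolding bop_apply_def norm_bop.rep_eq by (rule norm_blinfun_bound)

lemma norm_bop_Rep_bop: "norm A = norm (Rep_bop A)"
  by (rule norm_bop.rep_eq)

lemma Rep_bop_minus: "Rep_bop (A - B) = Rep_bop A - Rep_bop B"
  by (rule minus_bop.rep_eq)

lemma bop_complete: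
  fixes X :: "nat \<Rightarrow> 'a bop" assumes C: "Cauchy X" shows "convergent X"
proof -
  have d: "dist (Rep_bop (X m)) (Rep_bop (X n)) = dist (X m) (X n)" for m n
    by (simp only: dist_norm dist_bop_def norm_bop_Rep_bop Rep_bop_minus)
  have "Cauchy (\<lambda>n. Rep_bop (X n))"
  proof (rule metric_CauchyI)
    fix e :: real assume "e > 0"
    then obtain M where "\<forall>m\<ge>M. \<forall>n\<ge>M. dist (X m) (X n) < e"
      using C metric_CauchyD by blast
    thus "\<exists>M. \<forall>m\<ge>M. \<forall>n\<ge>M. dist (Rep_bop (X m)) (Rep_bop (X n)) < e"
      by (intro exI[of _ M]) (simp only: d)
  qed
  then obtain L where L: "(\<lambda>n. Rep_bop (X n)) \<longlonglongrightarrow> L"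
    using Cauchy_convergent unfolding convergent_def by blast
  have Lc: "blinfun_apply L (c *\<^sub>C v) = c *\<^sub>C blinfun_apply L v" for c v
  proof -
    have 1: "(\<lambda>n. blinfun_apply (Rep_bop (X n)) (c *\<^sub>C v)) \<longlonglongrightarrow> blinfun_apply L (c *\<^sub>C v)"
      using L tendsto_const by (rule blinfun.tendsto)
    have "(\<lambda>n. blinfun_apply (Rep_bop (X n)) v) \<longlonglongrightarrow> blinfun_apply L v"
      using L tendsto_const by (rule blinfun.tendsto)
    hence "(\<lambda>n. c *\<^sub>C blinfun_apply (Rep_bop (X n)) v) \<longlonglongrightarrow> c *\<^sub>C blinfun_apply L v"
      by (rule bounded_linear.tendsto[OF bounded_linear_cscale])
    hence 2: "(\<lambda>n. blinfun_apply (Rep_bop (X n)) (c *\<^sub>C v)) \<longlonglongrightarrow> c *\<^sub>C blinfun_apply L v"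
      by (simp only: Rep_bop_cscale)
    from 1 2 show ?thesis by (rule LIMSEQ_unique)
  qed
  have Lmem: "L \<in> {A. \<forall>c v. blinfun_apply A (c *\<^sub>C v) = c *\<^sub>C blinfun_apply A v}"
    using Lc by simp
  have "(\<lambda>n. Rep_bop (X n) - L) \<longlonglongrightarrow> 0"
    using L by (rule LIM_zero)
  hence "(\<lambda>n. norm (Rep_bop (X n) - L)) \<longlonglongrightarrow> 0"
    by (rule tendsto_norm_zero)
  moreover have "(\<lambda>n. norm (Rep_bop (X n) - L)) = (\<lambda>n. dist (X n) (Abs_bop L))"
    by (simp only: dist_bop_def norm_bop_Rep_bop Rep_bop_minus Abs_bop_inverse[OF Lmem])
  ultimately have "(\<lambda>n. dist (X n) (Abs_bop L)) \<longlonglongrightarrow> 0" by (simp only:)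
  hence "X \<longlonglongrightarrow> Abs_bop L" by (rule tendsto_dist_iff[THEN iffD2])
  thus "convergent X" by (rule convergentI)
qed

instance bop :: (type) banach
  by standard (rule bop_complete)

section \<open>Matrices versus operators\<close>

lemma l2norm_Rep_ell2: "l2norm (Rep_ell2 v) = norm v"
  by (simp add: l2norm_def norm_ell2_sq[symmetric])

lemma bop_apply_expansion: "((\<lambda>j. Rep_ell2 v j *\<^sub>C bop_apply A (ket j)) has_sum bop_apply A v) UNIV"
  using has_sum_bounded_linear[OF bounded_linear_bop_apply ell2_expansion, of A v] by simp

lemma coord_expansion: "((\<lambda>j. Rep_ell2 v j * Rep_ell2 (bop_apply A (ket j)) i) has_sum Rep_ell2 (bop_apply A v) i) UNIV"
  using has_sum_bounded_linear[OF bounded_linear_Rep_ell2[of i] bop_apply_expansion[of v A]] by simp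

lemma cinner_expansion: "((\<lambda>j. Rep_ell2 v j * cinner (bop_apply A (ket j)) w) has_sum cinner (bop_apply A v) w) UNIV"
  using has_sum_bounded_linear[OF bounded_linear_cinner_left[of w] bop_apply_expansion[of v A]] by simp

definition bop_matrix :: "'x bop \<Rightarrow> 'x mat" where "bop_matrix A = (\<lambda>i j. Rep_ell2 (bop_apply A (ket j)) i)"

lemma bop_matrix_row_has_sum: "((\<lambda>j. bop_matrix A i j * Rep_ell2 v j) has_sum Rep_ell2 (bop_apply A v) i) UNIV"
  using coord_expansion[of v A i] by (simp add: bop_matrix_def mult.commute)

lemma mat_apply_bop_matrix: "mat_apply (bop_matrix A) (Rep_ell2 v) = Rep_ell2 (bop_apply A v)"
  using bop_matrix_row_has_sum[of A] by (auto simp: mat_apply_def intro!: ext infsumI)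

lemma bounded_bop_matrix: "bounded_mat (bop_matrix A)"
  unfolding bounded_mat_def
proof (intro exI[of _ "norm A"] ballI conjI allI)
  fix v :: "'a \<Rightarrow> complex" and i assume v: "v \<in> l2"
  define x where "x = Abs_ell2 v"
  have vx: "v = Rep_ell2 x" by (simp add: x_def Rep_ell2_Abs v)
  show "(\<lambda>j. bop_matrix A i j * v j) summable_on UNIV"
    unfolding vx using bop_matrix_row_has_sum by (rule has_sum_imp_summable)
  show "mat_apply (bop_matrix A) v \<in> l2" unfolding vx mat_apply_bop_matrix by simp
  show "l2norm (mat_apply (bop_matrix A) v) \<le> norm A * l2norm v"
    unfolding vx mat_apply_bop_matrix l2norm_Rep_ell2 by (rule norm_bop_apply)
qed

definition mat_apply_ell2 :: "'x mat \<Rightarrow> 'x ell2 \<Rightarrow> 'x ell2" where "mat_apply_ell2 t v = Abs_ell2 (mat_apply t (Rep_ell2 v))"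

lemma bounded_matD:
  assumes "bounded_mat t"
  obtains C where "\<And>v. v \<in> l2 \<Longrightarrow> (\<forall>i. (\<lambda>j. t i j * v j) summable_on UNIV)"
    "\<And>v. v \<in> l2 \<Longrightarrow> mat_apply t v \<in> l2"
    "\<And>v. v \<in> l2 \<Longrightarrow> l2norm (mat_apply t v) \<le> C * l2norm v"
  using assms unfolding bounded_mat_def by blast

lemma Rep_ell2_mat_apply_ell2: "bounded_mat t \<Longrightarrow> Rep_ell2 (mat_apply_ell2 t v) = mat_apply t (Rep_ell2 v)"
  unfolding mat_apply_ell2_def by (rule Rep_ell2_Abs) (erule bounded_matD, simp)

lemma mat_apply_ell2_bounded_clinear:
  assumes t: "bounded_mat t"
  shows "bounded_linear (mat_apply_ell2 t)" "mat_apply_ell2 t (c *\<^sub>C v) = c *\<^sub>C mat_apply_ell2 t v"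
proof -
  obtain C where s: "\<And>v i. v \<in> l2 \<Longrightarrow> (\<lambda>j. t i j * v j) summable_on UNIV"
    and b: "\<And>v. v \<in> l2 \<Longrightarrow> l2norm (mat_apply t v) \<le> C * l2norm v"
    using t by (rule bounded_matD) blast
  have add: "mat_apply_ell2 t (x + y) = mat_apply_ell2 t x + mat_apply_ell2 t y" for x y
    unfolding ell2_eq_iff
    by (simp add: Rep_ell2_mat_apply_ell2[OF t] mat_apply_def distrib_left infsum_add s)
  have cs: "mat_apply_ell2 t (c *\<^sub>C v) = c *\<^sub>C mat_apply_ell2 t v" for c v
    unfolding ell2_eq_iff
    by (simp add: Rep_ell2_mat_apply_ell2[OF t] mat_apply_def mult.left_commute infsum_cmult_right')
  show "mat_apply_ell2 t (c *\<^sub>C v) = c *\<^sub>C mat_apply_ell2 t v" by (rule cs)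
  show "bounded_linear (mat_apply_ell2 t)"
  proof (rule bounded_linear_intro[of _ C])
    show "mat_apply_ell2 t (x + y) = mat_apply_ell2 t x + mat_apply_ell2 t y" for x y by (rule add)
    show "mat_apply_ell2 t (r *\<^sub>R x) = r *\<^sub>R mat_apply_ell2 t x" for r x
      by (simp add: scaleR_cscale cs)
    show "norm (mat_apply_ell2 t x) \<le> norm x * C" for x
      using b[of "Rep_ell2 x"]
        by (simp add: l2norm_Rep_ell2[symmetric] Rep_ell2_mat_apply_ell2[OF t] mult.commute)
  qed
qed

definition matrix_bop :: "'x mat \<Rightarrow> 'x bop" where "matrix_bop t = Abs_bop (Blinfun (mat_apply_ell2 t))"

lemma bop_apply_matrix_bop: assumes t: "bounded_mat t" shows "bop_apply (matrix_bop t) = mat_apply_ell2 t"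
proof -
  have "Blinfun (mat_apply_ell2 t) \<in> {A. \<forall>c v. blinfun_apply A (c *\<^sub>C v) = c *\<^sub>C blinfun_apply A v}"
    using mat_apply_ell2_bounded_clinear[OF t] by (simp add: bounded_linear_Blinfun_apply)
  thus ?thesis unfolding bop_apply_def matrix_bop_def
    by (simp add: Abs_bop_inverse bounded_linear_Blinfun_apply mat_apply_ell2_bounded_clinear[OF t])
qed

lemma Rep_ell2_bop_apply_matrix_bop: "bounded_mat t \<Longrightarrow> Rep_ell2 (bop_apply (matrix_bop t) v) = mat_apply t (Rep_ell2 v)"
  by (simp add: bop_apply_matrix_bop Rep_ell2_mat_apply_ell2)

lemma mat_apply_ket: "mat_apply t (Rep_ell2 (ket k)) = (\<lambda>i. t i k)"
proof
  fix i
  have "((\<lambda>j. t i j * Rep_ell2 (ket k) j) has_sum (\<Sum>j\<in>{k}. t i j * Rep_ell2 (ket k) j)) UNIV"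
    by (rule has_sum_finite_neutralI[of "{k}"]) (auto simp: Rep_ell2_ket)
  thus "mat_apply t (Rep_ell2 (ket k)) i = t i k" by (simp add: mat_apply_def Rep_ell2_ket infsumI)
qed

lemma bop_matrix_matrix_bop: "bounded_mat t \<Longrightarrow> bop_matrix (matrix_bop t) = t"
  by (simp add: bop_matrix_def Rep_ell2_bop_apply_matrix_bop mat_apply_ket)

lemma matrix_bop_bop_matrix[simp]: "matrix_bop (bop_matrix A) = A"
  by (rule bop_eqI) (simp add: ell2_eq_iff Rep_ell2_bop_apply_matrix_bop bounded_bop_matrix mat_apply_bop_matrix)

lemma bop_matrix_inject: "bop_matrix A = bop_matrix B \<longleftrightarrow> A = B"
  by (metis matrix_bop_bop_matrix)

lemma norm_bop_Sup: "norm A = Sup {norm (bop_apply A x) | x. norm x \<le> 1}"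
proof -
  let ?S = "{norm (bop_apply A x) | x. norm x \<le> 1}"
  have ne: "?S \<noteq> {}" by (auto intro!: exI[of _ 0])
  have le: "norm (bop_apply A x) \<le> norm A" if "norm x \<le> 1" for x
    using norm_bop_apply[of A x] mult_left_le[OF that norm_ge_zero[of A]] by linarith
  have bdd: "bdd_above ?S"
    by (rule bdd_aboveI[of _ "norm A"]) (auto intro: le)
  have "0 \<in> ?S" by (auto intro!: exI[of _ 0])
  hence S0: "0 \<le> Sup ?S" using bdd by (rule cSup_upper)
  show ?thesis
  proof (rule antisym)
    show "norm A \<le> Sup ?S"
    proof (rule norm_bop_bound[OF S0])
      fix v :: "'a ell2"
      show "norm (bop_apply A v) \<le> Sup ?S * norm v"
      proof (cases "v = 0")
        case False
        define x where "x = (1 / norm v) *\<^sub>R v"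
        have "norm x \<le> 1" using False by (simp add: x_def)
        hence "norm (bop_apply A x) \<le> Sup ?S" using bdd by (intro cSup_upper) auto
        moreover have "norm (bop_apply A x) = norm (bop_apply A v) / norm v"
          using False by (simp add: x_def)
        ultimately show ?thesis using False by (simp add: divide_le_eq)
      qed simp
    qed
    show "Sup ?S \<le> norm A"
    proof (rule cSup_least[OF ne])
      fix y assume "y \<in> ?S"
      then obtain x where "y = norm (bop_apply A x)" "norm x \<le> 1" by auto
      thus "y \<le> norm A" using norm_bop_apply[of A x]
        by (metis mult_left_le norm_ge_zero order_trans)
    qed
  qed
qed

lemma opnorm_matrix_bop: assumes t: "bounded_mat t" shows "opnorm t = ennreal (norm (matrix_bop t))"
proof -
  have "{l2norm (mat_apply t v) | v. v \<in> l2 \<and> l2norm v \<le> 1} = {norm (bop_apply (matrix_bop t) x) | x. norm x \<le> 1}"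
  proof safe
    fix v :: "'a \<Rightarrow> complex" assume "v \<in> l2" "l2norm v \<le> 1"
    thus "\<exists>x. l2norm (mat_apply t v) = norm (bop_apply (matrix_bop t) x) \<and> norm x \<le> 1"
      by (intro exI[of _ "Abs_ell2 v"])
         (simp add: l2norm_Rep_ell2[symmetric] Rep_ell2_bop_apply_matrix_bop[OF t] Rep_ell2_Abs)
  next
    fix x :: "'a ell2" assume "norm x \<le> 1"
    thus "\<exists>v. norm (bop_apply (matrix_bop t) x) = l2norm (mat_apply t v) \<and> v \<in> l2 \<and> l2norm v \<le> 1"
      by (intro exI[of _ "Rep_ell2 x"]) (simp add: l2norm_Rep_ell2[symmetric] Rep_ell2_bop_apply_matrix_bop[OF t])
  qed
  thus ?thesis using t by (simp add: opnorm_def norm_bop_Sup[symmetric])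
qed

lemma opnorm_bop_matrix: "opnorm (bop_matrix A) = ennreal (norm A)"
  using opnorm_matrix_bop[OF bounded_bop_matrix] by simp

lemma mat_mult_matrix_bop:
  assumes s: "bounded_mat s" and t: "bounded_mat t"
  shows "mat_mult s t = bop_matrix (matrix_bop s * matrix_bop t)"
  by (simp add: bop_matrix_def mat_mult_def Rep_ell2_bop_apply_matrix_bop[OF s] Rep_ell2_bop_apply_matrix_bop[OF t] mat_apply_ket
      mat_apply_def[of s])

lemma mat_mult_bop_matrix: "mat_mult (bop_matrix A) (bop_matrix B) = bop_matrix (A * B)"
  by (simp add: mat_mult_matrix_bop bounded_bop_matrix)

lemma cnj_mult_self: "cnj z * z = (complex_of_real (cmod z))\<^sup>2"
  by (metis complex_norm_square mult.commute of_real_power)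

lemma adjoint_bop_matrix_l2:
  fixes A :: "'x bop" and w :: "'x ell2"
  defines "u \<equiv> (\<lambda>k. cinner w (bop_apply A (ket k)))"
  shows "u \<in> l2" "l2norm u \<le> norm A * norm w"
proof -
  have bnd: "(\<Sum>k\<in>F. (cmod (u k))\<^sup>2) \<le> (norm A * norm w)\<^sup>2" if F: "finite F" for F
  proof -
    define x where "x = (\<Sum>k\<in>F. u k *\<^sub>C ket k)"
    define S where "S = (\<Sum>k\<in>F. (cmod (u k))\<^sup>2)"
    have S0: "S \<ge> 0" by (simp add: S_def sum_nonneg)
    have nx: "norm x = sqrt S"
      using norm_sum_ket_sq[OF F, of u] by (simp add: x_def S_def real_sqrt_unique)
    have "cinner (bop_apply A x) w = (\<Sum>k\<in>F. u k * cinner (bop_apply A (ket k)) w)"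
      by (simp add: x_def linear_sum[OF bounded_linear.linear[OF bounded_linear_bop_apply]]
          cinner_sum_left)
    also have "\<dots> = (\<Sum>k\<in>F. complex_of_real ((cmod (u k))\<^sup>2))"
      by (rule sum.cong) (simp_all add: u_def cnj_mult_self cinner_commute[of w])
    finally have "cinner (bop_apply A x) w = complex_of_real S" by (simp add: S_def)
    hence "S = cmod (cinner (bop_apply A x) w)" using S0 by simp
    also have "\<dots> \<le> norm (bop_apply A x) * norm w" by (rule cinner_cauchy_schwarz)
    also have "\<dots> \<le> norm A * norm x * norm w" by (intro mult_right_mono norm_bop_apply) simp
    finally have "S \<le> (norm A * norm w) * sqrt S" by (simp add: nx mult_ac)
    thus ?thesis using S0 unfolding S_def by (intro le_square_if_le_mult_sqrt) simp_all
  qed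
  show "u \<in> l2" using bnd by (rule l2_of_finite_sums_bounded)
  have "infsum (\<lambda>i. (cmod (u i))\<^sup>2) UNIV \<le> (norm A * norm w)\<^sup>2"
    using bnd by (rule l2_of_finite_sums_bounded)
  from real_sqrt_le_mono[OF this] show "l2norm u \<le> norm A * norm w" unfolding l2norm_def by simp
qed

lemma mat_apply_adjoint_bop_matrix:
  "mat_apply (adjoint (bop_matrix A)) (Rep_ell2 w) = (\<lambda>k. cinner w (bop_apply A (ket k)))"
  by (simp add: mat_apply_def adjoint_def bop_matrix_def cinner.rep_eq l2inner_def mult.commute)

lemma bounded_adjoint_bop_matrix: "bounded_mat (adjoint (bop_matrix A))"
  unfolding bounded_mat_def
proof (intro exI[of _ "norm A"] ballI conjI allI)
  fix v :: "'a \<Rightarrow> complex" and k assume v: "v \<in> l2"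
  define w where "w = Abs_ell2 v"
  have vw: "v = Rep_ell2 w" by (simp add: w_def Rep_ell2_Abs v)
  show "(\<lambda>i. adjoint (bop_matrix A) k i * v i) summable_on UNIV"
    unfolding adjoint_def using l2_prod_summable[OF l2_cnj[OF Rep_ell2_l2[of "bop_apply A (ket k)"]] v]
    by (simp add: bop_matrix_def)
  show "mat_apply (adjoint (bop_matrix A)) v \<in> l2"
    unfolding vw mat_apply_adjoint_bop_matrix by (rule adjoint_bop_matrix_l2)
  show "l2norm (mat_apply (adjoint (bop_matrix A)) v) \<le> norm A * l2norm v"
    unfolding vw mat_apply_adjoint_bop_matrix l2norm_Rep_ell2 by (rule adjoint_bop_matrix_l2)
qed

definition adj :: "'x bop \<Rightarrow> 'x bop" where "adj A = matrix_bop (adjoint (bop_matrix A))"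

lemma Rep_ell2_bop_apply_adj: "Rep_ell2 (bop_apply (adj A) w) = (\<lambda>k. cinner w (bop_apply A (ket k)))"
  by (simp add: adj_def Rep_ell2_bop_apply_matrix_bop bounded_adjoint_bop_matrix mat_apply_adjoint_bop_matrix)

lemma cinner_adj_right: "cinner (bop_apply A v) w = cinner v (bop_apply (adj A) w)"
proof -
  have "cinner v (bop_apply (adj A) w) = infsum (\<lambda>k. Rep_ell2 v k * cnj (cinner w (bop_apply A (ket k)))) UNIV"
    by (simp only: cinner.rep_eq l2inner_def Rep_ell2_bop_apply_adj)
  also have "\<dots> = infsum (\<lambda>k. Rep_ell2 v k * cinner (bop_apply A (ket k)) w) UNIV"
    by (simp only: cinner_commute[of w] complex_cnj_cnj)
  also have "\<dots> = cinner (bop_apply A v) w" using cinner_expansion by (rule infsumI)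
  finally show ?thesis by simp
qed

lemma cinner_adj_left: "cinner v (bop_apply A w) = cinner (bop_apply (adj A) v) w"
  by (metis cinner_adj_right cinner_commute)

lemma bop_matrix_adj: "bop_matrix (adj A) = adjoint (bop_matrix A)"
  by (simp add: adj_def bop_matrix_matrix_bop bounded_adjoint_bop_matrix)

lemma ell2_eqI_cinner': "(\<And>z. cinner z x = cinner z y) \<Longrightarrow> x = y"
  by (rule ell2_eqI_cinner) (metis cinner_commute)

lemma adj_unique: "(\<And>v w. cinner (bop_apply A v) w = cinner v (bop_apply B w)) \<Longrightarrow> adj A = B"
  by (rule bop_eqI, rule ell2_eqI_cinner') (metis cinner_adj_right)

lemma adj_adj[simp]: "adj (adj A) = A"
  by (rule adj_unique) (metis cinner_adj_right cinner_commute)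

lemma adj_mult: "adj (A * B) = adj B * adj A"
  by (rule adj_unique) (simp add: cinner_adj_right)

lemma adj_add: "adj (A + B) = adj A + adj B"
  by (rule adj_unique) (simp add: cinner_add_left cinner_add_right cinner_adj_right)

lemma adj_diff: "adj (A - B) = adj A - adj B"
  by (rule adj_unique) (simp add: cinner_diff_left cinner_diff_right cinner_adj_right)

lemma adj_scaleR: "adj (r *\<^sub>R A) = r *\<^sub>R adj A"
  by (rule adj_unique) (simp add: cinner_adj_right)

lemma adj_one[simp]: "adj 1 = 1"
  by (rule adj_unique) simp

lemma adj_zero[simp]: "adj 0 = 0"
  by (rule adj_unique) simp

lemma cmod_cinner_self: "cmod (cinner x x) = (norm x)\<^sup>2"
  by (simp only: cinner_self norm_of_real) simp

lemma mult_cnj_self: "w * cnj w = (complex_of_real (cmod w))\<^sup>2"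
  by (metis complex_norm_square of_real_power)

definition quad_form :: "'x bop \<Rightarrow> 'x ell2 \<Rightarrow> real" where "quad_form A v = Re (cinner (bop_apply A v) v)"

definition positive_op :: "'x bop \<Rightarrow> bool" where
  "positive_op A \<longleftrightarrow> (\<forall>v. cinner (bop_apply A v) v \<in> \<real> \<and> 0 \<le> Re (cinner (bop_apply A v) v))"

lemma positive_op_quad_form: "positive_op A \<Longrightarrow> cinner (bop_apply A v) v = complex_of_real (quad_form A v)"
  unfolding positive_op_def quad_form_def by (metis Reals_cases Re_complex_of_real)

lemma positive_op_quad_form_nonneg: "positive_op A \<Longrightarrow> 0 \<le> quad_form A v"
  unfolding positive_op_def quad_form_def by blast

lemma bop_eq_zeroI_cinner:
  assumes h: "\<And>x. cinner (bop_apply B x) x = 0"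
  shows "B = 0"
proof (rule bop_eqI)
  fix x
  have e1: "cinner (bop_apply B x) y + cinner (bop_apply B y) x = 0" for y
    using h[of "x + y"] h[of x] h[of y] by (simp add: cinner_add_left cinner_add_right algebra_simps)
  have "cinner (bop_apply B x) y = 0" for y
  proof -
    have "cinner (bop_apply B x) (\<i> *\<^sub>C y) + cinner (bop_apply B (\<i> *\<^sub>C y)) x = 0"
      by (rule e1)
    hence "- \<i> * cinner (bop_apply B x) y + \<i> * cinner (bop_apply B y) x = 0" by simp
    hence "cinner (bop_apply B y) x = cinner (bop_apply B x) y" by (simp add: algebra_simps)
    with e1[of y] show ?thesis by simp
  qed
  from this[of "bop_apply B x"] show "bop_apply B x = bop_apply 0 x" by (simp add: cinner_eq_zero_iff)
qed

lemma positive_op_selfadj: assumes "positive_op A" shows "adj A = A"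
proof -
  have "cinner (bop_apply (A - adj A) x) x = 0" for x
  proof -
    have "cinner (bop_apply (adj A) x) x = cinner x (bop_apply A x)" by (simp add: cinner_adj_left)
    also have "\<dots> = cnj (cinner (bop_apply A x) x)" by (rule cinner_commute)
    also have "\<dots> = cinner (bop_apply A x) x" using positive_op_quad_form[OF assms] by simp
    finally show ?thesis by (simp add: cinner_diff_left)
  qed
  hence "A - adj A = 0" by (rule bop_eq_zeroI_cinner)
  thus ?thesis by simp
qed

lemma selfadj_cinner: "adj A = A \<Longrightarrow> cinner (bop_apply A x) y = cinner x (bop_apply A y)"
  by (metis cinner_adj_right)

lemma nonneg_quadratic_discriminant:
  fixes a b m :: real
  assumes h: "\<And>t. 0 \<le> a + 2 * t * m + t\<^sup>2 * b" and b: "b \<ge> 0" and m: "m \<ge> 0"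
  shows "m\<^sup>2 \<le> a * b"
proof (cases "b = 0")
  case True
  have "m = 0"
  proof (rule ccontr)
    assume "m \<noteq> 0" hence "m > 0" using m by simp
    have "0 \<le> a + 2 * (- (a + 1) / (2 * m)) * m" using h[of "- (a + 1) / (2 * m)"] True by simp
    also have "\<dots> = -1" using \<open>m > 0\<close> by (simp add: field_simps)
    finally show False by simp
  qed
  thus ?thesis using True by simp
next
  case False
  hence bp: "b > 0" using b by simp
  have "0 \<le> a + 2 * (- m / b) * m + (- m / b)\<^sup>2 * b" by (rule h)
  also have "\<dots> = a - m\<^sup>2 / b" using bp by (simp add: field_simps power2_eq_square)
  finally have "m\<^sup>2 / b \<le> a" by simp
  thus ?thesis using bp by (simp add: divide_le_eq mult.commute)
qed

lemma positive_op_cauchy_schwarz: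
  assumes A: "positive_op A"
  shows "(cmod (cinner (bop_apply A x) y))\<^sup>2 \<le> quad_form A x * quad_form A y"
proof (cases "cinner (bop_apply A x) y = 0")
  case True thus ?thesis using positive_op_quad_form_nonneg[OF A] by simp
next
  case False
  define w where "w = cinner (bop_apply A x) y"
  define c where "c = w / complex_of_real (cmod w)"
  define u where "u = c *\<^sub>C y"
  have w0: "cmod w > 0" using False w_def by simp
  have cc: "cnj c * c = 1"
    using w0 by (simp add: c_def cnj_mult_self mult_cnj_self field_simps power2_eq_square)
  have h: "adj A = A" by (rule positive_op_selfadj[OF A])
  have xu: "cinner (bop_apply A x) u = complex_of_real (cmod w)"
    using w0 by (simp add: u_def c_def w_def[symmetric] cnj_mult_self mult_cnj_self field_simps power2_eq_square)
  have ux: "cinner (bop_apply A u) x = complex_of_real (cmod w)"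
    by (metis cinner_commute selfadj_cinner[OF h] xu complex_cnj_complex_of_real)
  have "cinner (bop_apply A u) u = (cnj c * c) * cinner (bop_apply A y) y" by (simp add: u_def mult_ac)
  hence uu: "quad_form A u = quad_form A y" unfolding quad_form_def using cc by simp
  have "0 \<le> quad_form A x + 2 * t * cmod w + t\<^sup>2 * quad_form A y" for t
  proof -
    have "0 \<le> quad_form A (x + t *\<^sub>R u)" by (rule positive_op_quad_form_nonneg[OF A])
    also have "\<dots> = quad_form A x + 2 * t * cmod w + t\<^sup>2 * quad_form A u"
      unfolding quad_form_def using xu ux
      by (simp add: cinner_add_left cinner_add_right power2_eq_square algebra_simps)
    finally show ?thesis using uu by simp
  qed
  hence "(cmod w)\<^sup>2 \<le> quad_form A x * quad_form A y"
    by (rule nonneg_quadratic_discriminant) (use positive_op_quad_form_nonneg[OF A] in auto)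
  thus ?thesis by (simp add: w_def)
qed

lemma quad_form_le_norm: "quad_form A x \<le> norm A * (norm x)\<^sup>2"
proof -
  have "quad_form A x \<le> cmod (cinner (bop_apply A x) x)"
    unfolding quad_form_def by (rule complex_Re_le_cmod)
  also have "\<dots> \<le> norm (bop_apply A x) * norm x" by (rule cinner_cauchy_schwarz)
  also have "\<dots> \<le> norm A * norm x * norm x" by (intro mult_right_mono norm_bop_apply) simp
  finally show ?thesis by (simp add: power2_eq_square mult.assoc)
qed

lemma norm_bop_apply_sq_le_positive:
  assumes A: "positive_op A"
  shows "(norm (bop_apply A x))\<^sup>2 \<le> norm A * quad_form A x"
proof (cases "bop_apply A x = 0")
  case False
  have "((norm (bop_apply A x))\<^sup>2)\<^sup>2 = (cmod (cinner (bop_apply A x) (bop_apply A x)))\<^sup>2"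
    by (simp add: cmod_cinner_self)
  also have "\<dots> \<le> quad_form A x * quad_form A (bop_apply A x)"
    by (rule positive_op_cauchy_schwarz[OF A])
  also have "\<dots> \<le> quad_form A x * (norm A * (norm (bop_apply A x))\<^sup>2)"
    by (intro mult_left_mono quad_form_le_norm positive_op_quad_form_nonneg[OF A])
  finally have le: "((norm (bop_apply A x))\<^sup>2)\<^sup>2 \<le> quad_form A x * (norm A * (norm (bop_apply A x))\<^sup>2)" .
  define n where "n = (norm (bop_apply A x))\<^sup>2"
  have "n * n \<le> (norm A * quad_form A x) * n" using le unfolding n_def[symmetric]
    by (simp only: power2_eq_square mult_ac)
  moreover have "n > 0" using False by (simp add: n_def)
  ultimately show ?thesis
    using mult_le_cancel_right_pos[of n n "norm A * quad_form A x"] by (simp add: n_def)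
qed (simp add: positive_op_quad_form_nonneg[OF A])

lemma positive_op_quad_form_zero: "positive_op A \<Longrightarrow> quad_form A x = 0 \<Longrightarrow> bop_apply A x = 0"
  using norm_bop_apply_sq_le_positive[of A x] by simp

lemma norm_adj_le: "norm (adj A) \<le> norm A"
proof (rule norm_bop_bound)
  fix w
  have "(norm (bop_apply (adj A) w))\<^sup>2 = cmod (cinner (bop_apply (adj A) w) (bop_apply (adj A) w))"
    by (simp add: cmod_cinner_self)
  also have "\<dots> = cmod (cinner w (bop_apply A (bop_apply (adj A) w)))"
    by (simp add: cinner_adj_left)
  also have "\<dots> \<le> norm w * norm (bop_apply A (bop_apply (adj A) w))"
    by (rule cinner_cauchy_schwarz)
  also have "\<dots> \<le> norm w * (norm A * norm (bop_apply (adj A) w))"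
    by (intro mult_left_mono norm_bop_apply) simp
  finally have "norm (bop_apply (adj A) w) * norm (bop_apply (adj A) w) \<le> (norm A * norm w) * norm (bop_apply (adj A) w)"
    by (simp add: power2_eq_square mult_ac)
  thus "norm (bop_apply (adj A) w) \<le> norm A * norm w"
    by (cases "norm (bop_apply (adj A) w) = 0") (auto simp: mult_le_cancel_right)
qed simp

lemma bounded_linear_adj: "bounded_linear adj"
  by (rule bounded_linear_intro[of _ 1]) (auto simp: adj_add adj_scaleR norm_adj_le)

lemma tendsto_adj: "(X \<longlongrightarrow> L) F \<Longrightarrow> ((\<lambda>n. adj (X n)) \<longlongrightarrow> adj L) F"
  by (rule bounded_linear.tendsto[OF bounded_linear_adj])

lemma positive_op_adj_mult: "positive_op (adj T * T)"
  unfolding positive_op_def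
proof
  fix v
  have "cinner (bop_apply (adj T * T) v) v = complex_of_real ((norm (bop_apply T v))\<^sup>2)"
    by (simp add: cinner_adj_left[symmetric] cinner_self)
  thus "cinner (bop_apply (adj T * T) v) v \<in> \<real> \<and> 0 \<le> Re (cinner (bop_apply (adj T * T) v) v)" by simp
qed

section \<open>Square roots\<close>

text \<open>For norm B <= 1 the iteration Y_(n+1) = (B + Y_n^2)/2 converges to a Y with
  (1 - Y)^2 = 1 - B; its increments are dominated by those of the same iteration for the
  scalar norm B, which is increasing and bounded by 1.  For a positive A and c >= norm A,
  taking B = 1 - A/c gives the square root sqrt c (1 - Y) of A.\<close>

fun sqrt_iter :: "'x bop \<Rightarrow> nat \<Rightarrow> 'x bop" where
  "sqrt_iter B 0 = 0"
| "sqrt_iter B (Suc n) = (1/2) *\<^sub>R (B + sqrt_iter B n * sqrt_iter B n)"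

fun sqrt_iter_real :: "real \<Rightarrow> nat \<Rightarrow> real" where
  "sqrt_iter_real b 0 = 0"
| "sqrt_iter_real b (Suc n) = (b + (sqrt_iter_real b n)\<^sup>2) / 2"

lemma sqrt_iter_real_bounded_mono:
  assumes "0 \<le> b" "b \<le> 1"
  shows "0 \<le> sqrt_iter_real b n \<and> sqrt_iter_real b n \<le> 1 \<and> sqrt_iter_real b n \<le> sqrt_iter_real b (Suc n)"
proof (induction n)
  case 0 thus ?case using assms by simp
next
  case (Suc n)
  have y0: "0 \<le> sqrt_iter_real b n" "sqrt_iter_real b n \<le> 1" "sqrt_iter_real b n \<le> sqrt_iter_real b (Suc n)"
    using Suc by auto
  have "(sqrt_iter_real b n)\<^sup>2 \<le> 1" using y0 by (simp add: power_le_one)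
  hence y1: "0 \<le> sqrt_iter_real b (Suc n)" "sqrt_iter_real b (Suc n) \<le> 1" using assms by auto
  have "(sqrt_iter_real b n)\<^sup>2 \<le> (sqrt_iter_real b (Suc n))\<^sup>2"
    using y0 by (intro power_mono) auto
  hence "sqrt_iter_real b (Suc n) \<le> sqrt_iter_real b (Suc (Suc n))"
    by (simp only: sqrt_iter_real.simps(2)[of b "Suc n"] sqrt_iter_real.simps(2)[of b n]) simp
  thus ?case using y1 by blast
qed

lemma sqrt_iter_real_nonneg: "0 \<le> b \<Longrightarrow> 0 \<le> sqrt_iter_real b n"
  by (induction n) auto

lemma sqrt_iter_real_mono: "0 \<le> b \<Longrightarrow> b \<le> 1 \<Longrightarrow> incseq (sqrt_iter_real b)"
  using sqrt_iter_real_bounded_mono by (intro incseq_SucI) blast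

lemma sqrt_iter_real_Cauchy: "0 \<le> b \<Longrightarrow> b \<le> 1 \<Longrightarrow> Cauchy (sqrt_iter_real b)"
proof -
  assume b: "0 \<le> b" "b \<le> 1"
  have "bdd_above (range (sqrt_iter_real b))"
    using sqrt_iter_real_bounded_mono[OF b] by (intro bdd_aboveI2[where M=1]) blast
  from LIMSEQ_incseq_SUP[OF this sqrt_iter_real_mono[OF b]] show ?thesis
    by (intro convergent_Cauchy convergentI)
qed

lemma sqrt_iter_intertwine:
  assumes "T * B1 = B2 * T"
  shows "T * sqrt_iter B1 n = sqrt_iter B2 n * T"
proof (induction n)
  case (Suc n)
  have "T * sqrt_iter B1 (Suc n) = (1/2) *\<^sub>R (T * B1 + (T * sqrt_iter B1 n) * sqrt_iter B1 n)"
    by (simp add: distrib_left mult.assoc)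
  also have "\<dots> = (1/2) *\<^sub>R (B2 * T + sqrt_iter B2 n * (T * sqrt_iter B1 n))"
    using Suc assms by (simp add: mult.assoc)
  also have "\<dots> = sqrt_iter B2 (Suc n) * T"
    using Suc by (simp add: distrib_right mult.assoc)
  finally show ?case .
qed simp

lemma sqrt_iter_commute: "C * B = B * C \<Longrightarrow> C * sqrt_iter B n = sqrt_iter B n * C"
  by (rule sqrt_iter_intertwine)

lemma sqrt_iter_commute_Suc: "sqrt_iter B n * sqrt_iter B (Suc n) = sqrt_iter B (Suc n) * sqrt_iter B n"
proof -
  have c: "sqrt_iter B n * B = B * sqrt_iter B n"
    using sqrt_iter_commute[of B B n] by simp
  show ?thesis by (simp add: distrib_left distrib_right c mult.assoc)
qed

lemma sqrt_iter_norm: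
  assumes "norm B \<le> b"
  shows "norm (sqrt_iter B n) \<le> sqrt_iter_real b n"
proof (induction n)
  case (Suc n)
  have "norm (sqrt_iter B (Suc n)) = (1/2) * norm (B + sqrt_iter B n * sqrt_iter B n)" by simp
  also have "\<dots> \<le> (1/2) * (norm B + norm (sqrt_iter B n) * norm (sqrt_iter B n))"
    by (intro mult_left_mono order_trans[OF norm_triangle_ineq] add_left_mono norm_mult_ineq) auto
  also have "\<dots> \<le> (1/2) * (b + sqrt_iter_real b n * sqrt_iter_real b n)"
    using Suc assms sqrt_iter_real_nonneg[of b n] order_trans[OF norm_ge_zero assms]
    by (intro mult_left_mono add_mono mult_mono) auto
  finally show ?case by (simp add: power2_eq_square)
qed simp

lemma sqrt_iter_diff:
  assumes "norm B \<le> b" "0 \<le> b" "b \<le> 1"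
  shows "norm (sqrt_iter B (Suc n) - sqrt_iter B n) \<le> sqrt_iter_real b (Suc n) - sqrt_iter_real b n"
proof (induction n)
  case 0 thus ?case using sqrt_iter_norm[OF assms(1), of 1] by simp
next
  case (Suc n)
  let ?Y1 = "sqrt_iter B (Suc n)" and ?Y0 = "sqrt_iter B n"
  have "sqrt_iter B (Suc (Suc n)) - ?Y1 = (1/2) *\<^sub>R (?Y1 * ?Y1 - ?Y0 * ?Y0)"
    by (simp only: sqrt_iter.simps(2)[of B "Suc n"] sqrt_iter.simps(2)[of B n]) (simp add: algebra_simps)
  also have "?Y1 * ?Y1 - ?Y0 * ?Y0 = (?Y1 + ?Y0) * (?Y1 - ?Y0)"
    using sqrt_iter_commute_Suc[of B n] by (simp add: algebra_simps)
  finally have "norm (sqrt_iter B (Suc (Suc n)) - ?Y1) = (1/2) * norm ((?Y1 + ?Y0) * (?Y1 - ?Y0))" by simp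
  also have "\<dots> \<le> (1/2) * ((sqrt_iter_real b (Suc n) + sqrt_iter_real b n) * (sqrt_iter_real b (Suc n) - sqrt_iter_real b n))"
  proof (intro mult_left_mono order_trans[OF norm_mult_ineq] mult_mono)
    show "norm (?Y1 + ?Y0) \<le> sqrt_iter_real b (Suc n) + sqrt_iter_real b n"
      using sqrt_iter_norm[OF assms(1)] by (intro order_trans[OF norm_triangle_ineq] add_mono)
    show "norm (?Y1 - ?Y0) \<le> sqrt_iter_real b (Suc n) - sqrt_iter_real b n" by (rule Suc)
    have p1: "0 \<le> sqrt_iter_real b (Suc n)" and p2: "0 \<le> sqrt_iter_real b n"
      using sqrt_iter_real_nonneg[OF assms(2)] by blast+
    show "0 \<le> sqrt_iter_real b (Suc n) + sqrt_iter_real b n" by (rule add_nonneg_nonneg[OF p1 p2])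
  qed auto
  also have "\<dots> = sqrt_iter_real b (Suc (Suc n)) - sqrt_iter_real b (Suc n)"
    by (simp add: power2_eq_square algebra_simps)
  finally show ?case .
qed

lemma sqrt_iter_diff_gen:
  assumes "norm B \<le> b" "0 \<le> b" "b \<le> 1" "n \<le> m"
  shows "norm (sqrt_iter B m - sqrt_iter B n) \<le> sqrt_iter_real b m - sqrt_iter_real b n"
  using assms(4)
proof (induction m rule: dec_induct)
  case (step m)
  have "norm (sqrt_iter B (Suc m) - sqrt_iter B n) \<le> norm (sqrt_iter B (Suc m) - sqrt_iter B m) + norm (sqrt_iter B m - sqrt_iter B n)"
    by (rule order_trans[OF _ norm_triangle_ineq]) simp
  also have "\<dots> \<le> (sqrt_iter_real b (Suc m) - sqrt_iter_real b m) + (sqrt_iter_real b m - sqrt_iter_real b n)"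
    by (intro add_mono sqrt_iter_diff assms step)
  finally show ?case by simp
qed simp

lemma sqrt_iter_Cauchy:
  assumes "norm B \<le> 1"
  shows "Cauchy (sqrt_iter B)"
proof (rule metric_CauchyI)
  fix e :: real assume "e > 0"
  have nb: "norm B \<le> norm B" "0 \<le> norm B" "norm B \<le> 1" using assms by auto
  obtain M where M: "\<forall>m\<ge>M. \<forall>n\<ge>M. dist (sqrt_iter_real (norm B) m) (sqrt_iter_real (norm B) n) < e"
    using metric_CauchyD[OF sqrt_iter_real_Cauchy[OF nb(2,3)] \<open>e > 0\<close>] by blast
  have "dist (sqrt_iter B m) (sqrt_iter B n) < e" if "m \<ge> M" "n \<ge> M" for m n
  proof (cases "n \<le> m")
    case True
    have "dist (sqrt_iter B m) (sqrt_iter B n) \<le> sqrt_iter_real (norm B) m - sqrt_iter_real (norm B) n"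
      unfolding dist_norm by (rule sqrt_iter_diff_gen[OF nb True])
    also have "\<dots> \<le> dist (sqrt_iter_real (norm B) m) (sqrt_iter_real (norm B) n)"
      by (simp add: dist_real_def)
    finally show ?thesis using M that by fastforce
  next
    case False
    have "dist (sqrt_iter B m) (sqrt_iter B n) = norm (sqrt_iter B n - sqrt_iter B m)"
      by (simp add: dist_norm norm_minus_commute)
    also have "\<dots> \<le> sqrt_iter_real (norm B) n - sqrt_iter_real (norm B) m"
      using False by (intro sqrt_iter_diff_gen[OF nb]) simp
    also have "\<dots> \<le> dist (sqrt_iter_real (norm B) m) (sqrt_iter_real (norm B) n)"
      by (simp add: dist_real_def)
    finally show ?thesis using M that by fastforce
  qed
  thus "\<exists>M. \<forall>m\<ge>M. \<forall>n\<ge>M. dist (sqrt_iter B m) (sqrt_iter B n) < e"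
    by blast
qed

definition sqrt_iter_lim :: "'x bop \<Rightarrow> 'x bop" where "sqrt_iter_lim B = lim (sqrt_iter B)"

lemma sqrt_iter_lim_tendsto: "norm B \<le> 1 \<Longrightarrow> sqrt_iter B \<longlonglongrightarrow> sqrt_iter_lim B"
  unfolding sqrt_iter_lim_def using sqrt_iter_Cauchy Cauchy_convergent convergent_LIMSEQ_iff by blast

lemma sqrt_iter_lim_eq:
  assumes "norm B \<le> 1"
  shows "sqrt_iter_lim B = (1/2) *\<^sub>R (B + sqrt_iter_lim B * sqrt_iter_lim B)"
proof -
  have "(\<lambda>n. sqrt_iter B (Suc n)) \<longlonglongrightarrow> sqrt_iter_lim B"
    using sqrt_iter_lim_tendsto[OF assms] by (rule LIMSEQ_Suc)
  moreover have "(\<lambda>n. sqrt_iter B (Suc n)) \<longlonglongrightarrow> (1/2) *\<^sub>R (B + sqrt_iter_lim B * sqrt_iter_lim B)"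
    unfolding sqrt_iter.simps using sqrt_iter_lim_tendsto[OF assms] by (intro tendsto_intros)
  ultimately show ?thesis by (rule LIMSEQ_unique)
qed

lemma sqrt_iter_lim_norm:
  assumes "norm B \<le> 1"
  shows "norm (sqrt_iter_lim B) \<le> 1"
proof -
  have "(\<lambda>n. norm (sqrt_iter B n)) \<longlonglongrightarrow> norm (sqrt_iter_lim B)"
    using sqrt_iter_lim_tendsto[OF assms] by (rule tendsto_norm)
  moreover have "norm (sqrt_iter B n) \<le> 1" for n
    using sqrt_iter_norm[OF assms, of n] sqrt_iter_real_bounded_mono[of 1 n] by simp
  ultimately show ?thesis by (intro LIMSEQ_le_const2) auto
qed

lemma sqrt_iter_lim_intertwine:
  assumes "norm B1 \<le> 1" "norm B2 \<le> 1" "T * B1 = B2 * T"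
  shows "T * sqrt_iter_lim B1 = sqrt_iter_lim B2 * T"
proof -
  have "(\<lambda>n. T * sqrt_iter B1 n) \<longlonglongrightarrow> T * sqrt_iter_lim B1"
    using sqrt_iter_lim_tendsto[OF assms(1)] by (intro tendsto_intros)
  moreover have "(\<lambda>n. T * sqrt_iter B1 n) \<longlonglongrightarrow> sqrt_iter_lim B2 * T"
    unfolding sqrt_iter_intertwine[OF assms(3)]
      using sqrt_iter_lim_tendsto[OF assms(2)] by (intro tendsto_intros)
  ultimately show ?thesis by (rule LIMSEQ_unique)
qed

lemma sqrt_iter_lim_selfadj:
  assumes "norm B \<le> 1" "adj B = B"
  shows "adj (sqrt_iter_lim B) = sqrt_iter_lim B"
proof -
  have h: "adj (sqrt_iter B n) = sqrt_iter B n" for n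
    by (induction n) (simp_all add: adj_scaleR adj_add adj_mult assms(2))
  have "(\<lambda>n. adj (sqrt_iter B n)) \<longlonglongrightarrow> adj (sqrt_iter_lim B)"
    using sqrt_iter_lim_tendsto[OF assms(1)] by (rule tendsto_adj)
  hence "sqrt_iter B \<longlonglongrightarrow> adj (sqrt_iter_lim B)" by (simp add: h)
  thus ?thesis using sqrt_iter_lim_tendsto[OF assms(1)] by (rule LIMSEQ_unique)
qed

lemma norm_one_minus_positive_op:
  assumes A: "positive_op A" and n: "norm A \<le> 1"
  shows "norm (1 - A) \<le> 1"
proof (rule norm_bop_bound)
  fix v
  have r: "Re (cinner v (bop_apply A v)) = quad_form A v"
    by (simp add: quad_form_def cinner_commute[of v])
  have "(norm (bop_apply (1 - A) v))\<^sup>2 = Re (cinner (v - bop_apply A v) (v - bop_apply A v))"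
    by (simp add: cinner_self)
  also have "\<dots> = Re (cinner v v) - Re (cinner v (bop_apply A v)) - Re (cinner (bop_apply A v) v) + Re (cinner (bop_apply A v) (bop_apply A v))"
    by (simp add: cinner_diff_left cinner_diff_right)
  also have "\<dots> = (norm v)\<^sup>2 - 2 * quad_form A v + (norm (bop_apply A v))\<^sup>2"
    by (simp only: r cinner_self Re_complex_of_real) (simp add: quad_form_def)
  also have "(norm (bop_apply A v))\<^sup>2 \<le> quad_form A v"
    using norm_bop_apply_sq_le_positive[OF A, of v] mult_right_mono[OF n positive_op_quad_form_nonneg[OF A, of v]] by simp
  hence "(norm v)\<^sup>2 - 2 * quad_form A v + (norm (bop_apply A v))\<^sup>2 \<le> (norm v)\<^sup>2"
    using positive_op_quad_form_nonneg[OF A, of v] by simp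
  finally have "(norm (bop_apply (1 - A) v))\<^sup>2 \<le> (norm v)\<^sup>2" .
  thus "norm (bop_apply (1 - A) v) \<le> 1 * norm v" by (simp add: power2_le_iff_abs_le)
qed simp

definition bop_sqrt_scaled :: "real \<Rightarrow> 'x bop \<Rightarrow> 'x bop" where
  "bop_sqrt_scaled c A = sqrt c *\<^sub>R (1 - sqrt_iter_lim (1 - (1/c) *\<^sub>R A))"

lemma positive_op_scaleR: "positive_op A \<Longrightarrow> 0 \<le> r \<Longrightarrow> positive_op (r *\<^sub>R A)"
  unfolding positive_op_def by (simp add: scaleR_cscale)

lemma bop_sqrt_scaled_spec:
  assumes A: "positive_op A" and c: "c \<ge> 1" "norm A \<le> c"
  shows "positive_op (bop_sqrt_scaled c A)" "bop_sqrt_scaled c A * bop_sqrt_scaled c A = A"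
proof -
  define A' where "A' = (1/c) *\<^sub>R A"
  define B where "B = 1 - A'"
  define Y where "Y = sqrt_iter_lim B"
  have A'p: "positive_op A'" unfolding A'_def using c by (intro positive_op_scaleR A) auto
  have nA': "norm A' \<le> 1" using c by (simp add: A'_def divide_le_eq)
  have nB: "norm B \<le> 1" unfolding B_def by (rule norm_one_minus_positive_op[OF A'p nA'])
  have hB: "adj B = B" by (simp add: B_def adj_diff positive_op_selfadj[OF A'p])
  have hY: "adj Y = Y" unfolding Y_def by (rule sqrt_iter_lim_selfadj[OF nB hB])
  have nY: "norm Y \<le> 1" unfolding Y_def by (rule sqrt_iter_lim_norm[OF nB])
  have h: "Y = (1/2) *\<^sub>R (B + Y * Y)" using sqrt_iter_lim_eq[OF nB] unfolding Y_def[symmetric] .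
  hence "2 *\<^sub>R Y = 2 *\<^sub>R ((1/2) *\<^sub>R (B + Y * Y))" by (rule arg_cong)
  hence "2 *\<^sub>R Y = B + Y * Y" by simp
  hence eq: "Y * Y = 2 *\<^sub>R Y - B" by (metis add_diff_cancel_left')
  have sq: "(1 - Y) * (1 - Y) = A'"
    by (simp add: algebra_simps eq B_def) (simp add: scaleR_2)
  have s: "bop_sqrt_scaled c A = sqrt c *\<^sub>R (1 - Y)"
    by (simp add: bop_sqrt_scaled_def Y_def B_def A'_def)
  show "bop_sqrt_scaled c A * bop_sqrt_scaled c A = A"
    unfolding s using c by (simp add: sq A'_def)
  have "positive_op (1 - Y)" unfolding positive_op_def
  proof
    fix v
    have r: "cinner (bop_apply Y v) v \<in> \<real>"
      by (metis Reals_cnj_iff cinner_commute selfadj_cinner[OF hY])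
    have "Re (cinner (bop_apply Y v) v) \<le> cmod (cinner (bop_apply Y v) v)"
      by (rule complex_Re_le_cmod)
    also have "\<dots> \<le> norm (bop_apply Y v) * norm v" by (rule cinner_cauchy_schwarz)
    also have "\<dots> \<le> norm Y * norm v * norm v" by (intro mult_right_mono norm_bop_apply) simp
    also have "\<dots> \<le> (norm v)\<^sup>2" using mult_right_mono[OF nY, of "norm v * norm v"]
      by (simp add: power2_eq_square mult.assoc)
    finally have le: "Re (cinner (bop_apply Y v) v) \<le> (norm v)\<^sup>2" .
    have "cinner (bop_apply (1 - Y) v) v = complex_of_real ((norm v)\<^sup>2) - cinner (bop_apply Y v) v"
      by (simp add: cinner_diff_left cinner_self)
    thus "cinner (bop_apply (1 - Y) v) v \<in> \<real> \<and> 0 \<le> Re (cinner (bop_apply (1 - Y) v) v)"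
      using r le by simp
  qed
  thus "positive_op (bop_sqrt_scaled c A)" unfolding s by (rule positive_op_scaleR) (use c in simp)
qed

lemma commuting_positive_sqrt_unique:
  assumes S: "positive_op S" and R: "positive_op R" and eq: "S * S = R * R" and com: "S * R = R * S"
  shows "S = R"
proof -
  define D where "D = S - R"
  have hS: "adj S = S" by (rule positive_op_selfadj[OF S])
  have hR: "adj R = R" by (rule positive_op_selfadj[OF R])
  have hD: "adj D = D" unfolding D_def by (simp add: adj_diff hS hR)
  have z: "D * S * D + D * R * D = 0"
  proof -
    have "D * S * D + D * R * D = D * ((S + R) * (S - R))"
      by (simp add: D_def algebra_simps)
    also have "(S + R) * (S - R) = 0" using eq com by (simp add: algebra_simps)
    finally show ?thesis by simp
  qed
  have "bop_apply D (bop_apply D v) = 0" for v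
  proof -
    define w where "w = bop_apply D v"
    have "quad_form S w + quad_form R w = Re (cinner (bop_apply (D * S * D + D * R * D) v) v)"
      by (simp add: quad_form_def w_def cinner_add_left selfadj_cinner[OF hD])
    hence "quad_form S w + quad_form R w = 0" using z by simp
    hence "quad_form S w = 0" "quad_form R w = 0"
      using positive_op_quad_form_nonneg[OF S, of w] positive_op_quad_form_nonneg[OF R, of w] by auto
    hence "bop_apply S w = 0" "bop_apply R w = 0" using positive_op_quad_form_zero S R by blast+
    thus ?thesis by (simp add: D_def w_def)
  qed
  hence "bop_apply D v = 0" for v
  proof -
    have "(norm (bop_apply D v))\<^sup>2 = Re (cinner (bop_apply D v) (bop_apply D v))"
      by (simp add: cinner_self)
    also have "\<dots> = Re (cinner (bop_apply D (bop_apply D v)) v)"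
      by (simp add: selfadj_cinner[OF hD])
    finally show ?thesis using \<open>\<And>v. bop_apply D (bop_apply D v) = 0\<close> by simp
  qed
  hence "D = 0" by (intro bop_eqI) simp
  thus ?thesis by (simp add: D_def)
qed

lemma bop_sqrt_scaled_commute:
  assumes A: "positive_op A" and c: "c \<ge> 1" "norm A \<le> c" and C: "C * A = A * C"
  shows "C * bop_sqrt_scaled c A = bop_sqrt_scaled c A * C"
proof -
  define B where "B = 1 - (1/c) *\<^sub>R A"
  have A'p: "positive_op ((1/c) *\<^sub>R A)" using c by (intro positive_op_scaleR A) auto
  have nB: "norm B \<le> 1" unfolding B_def using c
    by (intro norm_one_minus_positive_op[OF A'p]) (simp add: divide_le_eq)
  have "C * B = B * C" using C by (simp add: B_def algebra_simps)
  hence "C * sqrt_iter_lim B = sqrt_iter_lim B * C" by (rule sqrt_iter_lim_intertwine[OF nB nB])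
  thus ?thesis by (simp add: bop_sqrt_scaled_def B_def[symmetric] algebra_simps)
qed

lemma bop_sqrt_scaled_unique:
  assumes A: "positive_op A" and c: "c \<ge> 1" "norm A \<le> c" and S: "positive_op S" "S * S = A"
  shows "S = bop_sqrt_scaled c A"
proof (rule commuting_positive_sqrt_unique[OF S(1) bop_sqrt_scaled_spec(1)[OF A c]])
  show "S * S = bop_sqrt_scaled c A * bop_sqrt_scaled c A"
    using bop_sqrt_scaled_spec(2)[OF A c] S(2) by simp
  have "S * A = A * S" unfolding S(2)[symmetric] by (simp add: mult.assoc)
  thus "S * bop_sqrt_scaled c A = bop_sqrt_scaled c A * S" by (rule bop_sqrt_scaled_commute[OF A c])
qed

definition bop_sqrt :: "'x bop \<Rightarrow> 'x bop" where "bop_sqrt A = bop_sqrt_scaled (max 1 (norm A)) A"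

lemma bop_sqrt_spec: "positive_op A \<Longrightarrow> positive_op (bop_sqrt A)" "positive_op A \<Longrightarrow> bop_sqrt A * bop_sqrt A = A"
  unfolding bop_sqrt_def by (rule bop_sqrt_scaled_spec; simp)+

lemma bop_sqrt_unique: "positive_op A \<Longrightarrow> positive_op S \<Longrightarrow> S * S = A \<Longrightarrow> S = bop_sqrt A"
  unfolding bop_sqrt_def by (rule bop_sqrt_scaled_unique) simp_all

lemma bop_sqrt_eq_bop_sqrt_scaled: "positive_op A \<Longrightarrow> c \<ge> 1 \<Longrightarrow> norm A \<le> c \<Longrightarrow> bop_sqrt A = bop_sqrt_scaled c A"
  by (metis bop_sqrt_scaled_spec bop_sqrt_unique)

lemma bop_sqrt_intertwine:
  assumes X: "positive_op X" and Z: "positive_op Z" and T: "T * X = Z * T"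
  shows "T * bop_sqrt X = bop_sqrt Z * T"
proof -
  define c where "c = max 1 (max (norm X) (norm Z))"
  have c: "c \<ge> 1" "norm X \<le> c" "norm Z \<le> c" by (auto simp: c_def)
  define BX where "BX = 1 - (1/c) *\<^sub>R X"
  define BZ where "BZ = 1 - (1/c) *\<^sub>R Z"
  have nBX: "norm BX \<le> 1" unfolding BX_def using c
    by (intro norm_one_minus_positive_op positive_op_scaleR X) (auto simp: divide_le_eq)
  have nBZ: "norm BZ \<le> 1" unfolding BZ_def using c
    by (intro norm_one_minus_positive_op positive_op_scaleR Z) (auto simp: divide_le_eq)
  have "T * BX = BZ * T" using T by (simp add: BX_def BZ_def algebra_simps)
  hence "T * sqrt_iter_lim BX = sqrt_iter_lim BZ * T" by (rule sqrt_iter_lim_intertwine[OF nBX nBZ])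
  hence "T * bop_sqrt_scaled c X = bop_sqrt_scaled c Z * T"
    by (simp add: bop_sqrt_scaled_def BX_def[symmetric] BZ_def[symmetric] algebra_simps)
  thus ?thesis using bop_sqrt_eq_bop_sqrt_scaled[OF X c(1,2)] bop_sqrt_eq_bop_sqrt_scaled[OF Z c(1,3)] by simp
qed

definition bop_abs :: "'x bop \<Rightarrow> 'x bop" where
  "bop_abs A = bop_sqrt (adj A * A)"

lemma positive_bop_abs: "positive_op (bop_abs A)"
  and bop_abs_square: "bop_abs A * bop_abs A = adj A * A"
  unfolding bop_abs_def by (rule bop_sqrt_spec[OF positive_op_adj_mult])+

lemma bop_abs_intertwine: "A * bop_abs A = bop_abs (adj A) * A"
  unfolding bop_abs_def
  using bop_sqrt_intertwine[OF positive_op_adj_mult positive_op_adj_mult[of "adj A"], of A]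
  by (simp add: mult.assoc)

lemma geometric_partial_sum_left: "(1 - x) * (\<Sum>k<n. x ^ k) = 1 - x ^ n"
  for x :: "'a::ring_1"
proof (induction n)
  case (Suc n)
  have "(1 - x) * (\<Sum>k<Suc n. x ^ k) = (1 - x) * (\<Sum>k<n. x ^ k) + (1 - x) * x ^ n"
    by (simp add: distrib_left)
  also have "\<dots> = 1 - x ^ Suc n" by (simp only: Suc) (simp add: left_diff_distrib)
  finally show ?case .
qed simp

lemma geometric_partial_sum_right: "(\<Sum>k<n. x ^ k) * (1 - x) = 1 - x ^ n"
  for x :: "'a::ring_1"
proof (induction n)
  case (Suc n)
  have "(\<Sum>k<Suc n. x ^ k) * (1 - x) = (\<Sum>k<n. x ^ k) * (1 - x) + x ^ n * (1 - x)"
    by (simp add: distrib_right)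
  also have "\<dots> = 1 - x ^ Suc n" by (simp only: Suc) (simp add: right_diff_distrib power_commutes)
  finally show ?case .
qed simp

lemmas geometric_partial_sum = geometric_partial_sum_left geometric_partial_sum_right

lemma geometric_series_inverse:
  fixes x :: "'x bop"
  assumes x: "norm x < 1"
  shows "(1 - x) * suminf (\<lambda>n. x ^ n) = 1" "suminf (\<lambda>n. x ^ n) * (1 - x) = 1"
proof -
  have s: "summable (\<lambda>n. x ^ n)" by (rule complete_algebra_summable_geometric[OF x])
  have L: "(\<lambda>n. \<Sum>k<n. x ^ k) \<longlonglongrightarrow> suminf (\<lambda>n. x ^ n)"
    by (rule summable_LIMSEQ[OF s])
  have p: "(\<lambda>n. 1 - x ^ n) \<longlonglongrightarrow> 1 - 0"
    using x by (intro tendsto_intros LIMSEQ_power_zero)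
  have "(\<lambda>n. (1 - x) * (\<Sum>k<n. x ^ k)) \<longlonglongrightarrow> (1 - x) * suminf (\<lambda>n. x ^ n)"
    using L by (intro tendsto_intros)
  moreover have "(\<lambda>n. (1 - x) * (\<Sum>k<n. x ^ k)) \<longlonglongrightarrow> 1"
    using p by (simp add: geometric_partial_sum)
  ultimately show "(1 - x) * suminf (\<lambda>n. x ^ n) = 1" by (rule LIMSEQ_unique)
  have "(\<lambda>n. (\<Sum>k<n. x ^ k) * (1 - x)) \<longlonglongrightarrow> suminf (\<lambda>n. x ^ n) * (1 - x)"
    using L by (intro tendsto_intros)
  moreover have "(\<lambda>n. (\<Sum>k<n. x ^ k) * (1 - x)) \<longlonglongrightarrow> 1"
    using p by (simp add: geometric_partial_sum)
  ultimately show "suminf (\<lambda>n. x ^ n) * (1 - x) = 1" by (rule LIMSEQ_unique)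
qed

lemma selfadj_cinner_real: "adj X = X \<Longrightarrow> cinner (bop_apply X v) v \<in> \<real>"
  by (metis Reals_cnj_iff cinner_commute selfadj_cinner)

lemma positive_op_norm_le:
  assumes X: "positive_op X" and k: "0 \<le> k" and q: "\<And>v. quad_form X v \<le> k * (norm v)\<^sup>2"
  shows "norm X \<le> k"
proof -
  have "norm X \<le> sqrt (norm X * k)"
  proof (rule norm_bop_bound)
    fix v
    have "(norm (bop_apply X v))\<^sup>2 \<le> norm X * quad_form X v"
      by (rule norm_bop_apply_sq_le_positive[OF X])
    also have "\<dots> \<le> norm X * (k * (norm v)\<^sup>2)" by (intro mult_left_mono q) simp
    finally have "(norm (bop_apply X v))\<^sup>2 \<le> (sqrt (norm X * k) * norm v)\<^sup>2"
      using k by (simp add: power_mult_distrib mult.assoc)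
    thus "norm (bop_apply X v) \<le> sqrt (norm X * k) * norm v"
      by (rule power2_le_imp_le) (use k in simp)
  qed (use k in simp)
  hence "(norm X)\<^sup>2 \<le> norm X * k" using k
    by (metis norm_ge_zero power_mono real_sqrt_pow2 zero_le_mult_iff)
  thus ?thesis by (cases "norm X = 0") (use k in \<open>auto simp: power2_eq_square\<close>)
qed

lemma positive_op_add: "positive_op A \<Longrightarrow> positive_op B \<Longrightarrow> positive_op (A + B)"
  unfolding positive_op_def by (auto simp: cinner_add_left)

lemma positive_op_one: "positive_op 1"
  unfolding positive_op_def by (simp add: cinner_self)

lemma quad_form_simps: "quad_form (A + B) v = quad_form A v + quad_form B v" "quad_form (A - B) v = quad_form A v - quad_form B v"
  "quad_form (r *\<^sub>R A) v = r * quad_form A v" "quad_form 1 v = (norm v)\<^sup>2"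
  by (simp_all add: quad_form_def cinner_add_left cinner_diff_left cinner_self)

text \<open>P + e = c (1 - X) with c = norm P + e and X positive of norm at most 1 - e/c, so the
  Neumann series of X inverts it.\<close>

lemma positive_op_shift_invertible:
  assumes P: "positive_op P" and e: "e > 0"
  obtains Mi where "(P + e *\<^sub>R 1) * Mi = 1" "Mi * (P + e *\<^sub>R 1) = 1"
proof -
  define c where "c = norm P + e"
  have c0: "c > 0" using e by (simp add: c_def add_nonneg_pos)
  define x where "x = (1 - e / c) *\<^sub>R 1 - (1/c) *\<^sub>R P"
  have hx: "adj x = x" by (simp add: x_def adj_diff adj_scaleR positive_op_selfadj[OF P])
  have qx: "quad_form x v = (1 - e / c) * (norm v)\<^sup>2 - quad_form P v / c" for v
    by (simp add: x_def quad_form_simps)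
  have xpos: "positive_op x" unfolding positive_op_def
  proof
    fix v
    have qle: "quad_form P v \<le> norm P * (norm v)\<^sup>2" by (rule quad_form_le_norm)
    have "(1 - e / c) * (norm v)\<^sup>2 = (norm P * (norm v)\<^sup>2) / c"
      using c0 by (simp add: c_def field_simps)
    hence "quad_form P v / c \<le> (1 - e / c) * (norm v)\<^sup>2"
      using divide_right_mono[OF qle, of c] c0 by simp
    hence "0 \<le> quad_form x v" by (simp add: qx)
    thus "cinner (bop_apply x v) v \<in> \<real> \<and> 0 \<le> Re (cinner (bop_apply x v) v)"
      using selfadj_cinner_real[OF hx] by (simp add: quad_form_def)
  qed
  have "norm x \<le> 1 - e / c"
  proof (rule positive_op_norm_le[OF xpos])
    show "0 \<le> 1 - e / c" using c0 e by (simp add: c_def field_simps)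
    show "quad_form x v \<le> (1 - e / c) * (norm v)\<^sup>2" for v
      using positive_op_quad_form_nonneg[OF P, of v] c0 by (simp add: qx)
  qed
  moreover have "e / c > 0" using c0 e by simp
  ultimately have nx: "norm x < 1" by linarith
  define Mi where "Mi = (1/c) *\<^sub>R suminf (\<lambda>n. x ^ n)"
  have eq: "P + e *\<^sub>R 1 = c *\<^sub>R (1 - x)"
    using c0 by (simp add: x_def algebra_simps)
  show ?thesis
  proof
    show "(P + e *\<^sub>R 1) * Mi = 1"
      using c0 geometric_series_inverse(1)[OF nx] by (simp add: eq Mi_def)
    show "Mi * (P + e *\<^sub>R 1) = 1"
      using c0 geometric_series_inverse(2)[OF nx] by (simp add: eq Mi_def)
  qed
qed

lemma selfadj_inverse:
  assumes "adj M = M" "M * Mi = 1" "Mi * M = 1"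
  shows "adj Mi = Mi"
proof -
  have "adj (M * Mi) = adj 1" using assms(2) by simp
  hence am: "adj Mi * M = 1" by (simp add: adj_mult assms(1))
  have "adj Mi = adj Mi * (M * Mi)" by (simp add: assms(2))
  also have "\<dots> = (adj Mi * M) * Mi" by (simp only: mult.assoc)
  also have "\<dots> = Mi" by (simp add: am)
  finally show ?thesis .
qed

lemma commute_inverse:
  fixes C M Mi :: "'a::monoid_mult"
  assumes "C * M = M * C" "M * Mi = 1" "Mi * M = 1"
  shows "C * Mi = Mi * C"
proof -
  have "C * Mi = (Mi * M) * C * Mi" by (simp only: assms(3) mult_1_left)
  also have "\<dots> = Mi * (C * M) * Mi" by (simp add: assms(1) mult.assoc)
  also have "\<dots> = Mi * C * (M * Mi)" by (simp add: mult.assoc)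
  also have "\<dots> = Mi * C" by (simp add: assms(2))
  finally show ?thesis .
qed

section \<open>Schur multipliers of Gram matrices\<close>

lemma has_sum_sum:
  fixes f :: "'i \<Rightarrow> 'a \<Rightarrow> 'b::topological_comm_monoid_add"
  assumes "finite I" "\<And>i. i \<in> I \<Longrightarrow> (f i has_sum s i) A"
  shows "((\<lambda>k. \<Sum>i\<in>I. f i k) has_sum (\<Sum>i\<in>I. s i)) A"
  using assms by (induction I rule: finite_induct) (auto intro: has_sum_add)

lemma l2_cauchy_schwarz:
  fixes f g :: "'x \<Rightarrow> real"
  assumes f: "(\<lambda>k. (f k)\<^sup>2) summable_on UNIV" and g: "(\<lambda>k. (g k)\<^sup>2) summable_on UNIV"
    and fn: "\<And>k. f k \<ge> 0" and gn: "\<And>k. g k \<ge> 0"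
  shows "(\<lambda>k. f k * g k) summable_on UNIV"
    "infsum (\<lambda>k. f k * g k) UNIV \<le> sqrt (infsum (\<lambda>k. (f k)\<^sup>2) UNIV) * sqrt (infsum (\<lambda>k. (g k)\<^sup>2) UNIV)"
proof -
  have fl: "(\<lambda>k. complex_of_real (f k)) \<in> l2" using f fn by (simp add: l2_def)
  have gl: "(\<lambda>k. complex_of_real (g k)) \<in> l2" using g gn by (simp add: l2_def)
  show s: "(\<lambda>k. f k * g k) summable_on UNIV"
    using l2_prod_abs_summable[OF fl gl] fn gn by simp
  define u :: "'x ell2" where "u = Abs_ell2 (\<lambda>k. complex_of_real (f k))"
  define v :: "'x ell2" where "v = Abs_ell2 (\<lambda>k. complex_of_real (g k))"
  have vu: "Rep_ell2 u = (\<lambda>k. complex_of_real (f k))" by (simp add: u_def Rep_ell2_Abs fl)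
  have vv: "Rep_ell2 v = (\<lambda>k. complex_of_real (g k))" by (simp add: v_def Rep_ell2_Abs gl)
  have "cinner u v = infsum (\<lambda>k. complex_of_real (f k * g k)) UNIV"
    by (simp add: cinner.rep_eq l2inner_def vu vv)
  also have "\<dots> = complex_of_real (infsum (\<lambda>k. f k * g k) UNIV)"
    using has_sum_of_real[OF has_sum_infsum[OF s]] by (rule infsumI)
  finally have "infsum (\<lambda>k. f k * g k) UNIV = Re (cinner u v)" by simp
  also have "\<dots> \<le> cmod (cinner u v)" by (rule complex_Re_le_cmod)
  also have "\<dots> \<le> norm u * norm v" by (rule cinner_cauchy_schwarz)
  also have "norm u = sqrt (infsum (\<lambda>k. (f k)\<^sup>2) UNIV)"
    by (subst real_sqrt_unique[symmetric]) (simp_all add: norm_ell2_sq vu fn)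
  also have "norm v = sqrt (infsum (\<lambda>k. (g k)\<^sup>2) UNIV)"
    by (subst real_sqrt_unique[symmetric]) (simp_all add: norm_ell2_sq vv gn)
  finally show "infsum (\<lambda>k. f k * g k) UNIV \<le> sqrt (infsum (\<lambda>k. (f k)\<^sup>2) UNIV) * sqrt (infsum (\<lambda>k. (g k)\<^sup>2) UNIV)" .
qed

definition gram_slice :: "'x set \<Rightarrow> ('x \<Rightarrow> complex) \<Rightarrow> ('x \<Rightarrow> 'x ell2) \<Rightarrow> 'x \<Rightarrow> 'x ell2" where
  "gram_slice G x b k = (\<Sum>j\<in>G. (x j * Rep_ell2 (b j) k) *\<^sub>C ket j)"

lemma has_sum_norm_gram_slice_sq:
  assumes G: "finite G"
  shows "((\<lambda>k. (norm (gram_slice G x b k))\<^sup>2) has_sum (\<Sum>j\<in>G. (cmod (x j))\<^sup>2 * (norm (b j))\<^sup>2)) UNIV"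
proof -
  have "((\<lambda>k. (cmod (x j))\<^sup>2 * (cmod (Rep_ell2 (b j) k))\<^sup>2) has_sum ((cmod (x j))\<^sup>2 * (norm (b j))\<^sup>2)) UNIV" for j
    unfolding norm_ell2_sq
    by (rule has_sum_cmult_right, rule has_sum_infsum) (use Rep_ell2_l2[of "b j"] in \<open>simp add: l2_def\<close>)
  hence "((\<lambda>k. \<Sum>j\<in>G. (cmod (x j))\<^sup>2 * (cmod (Rep_ell2 (b j) k))\<^sup>2) has_sum
      (\<Sum>j\<in>G. (cmod (x j))\<^sup>2 * (norm (b j))\<^sup>2)) UNIV"
    by (intro has_sum_sum G)
  thus ?thesis
    by (simp add: gram_slice_def norm_sum_ket_sq[OF G] norm_mult power_mult_distrib)
qed

lemma has_sum_cinner_gram_slices: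
  assumes F: "finite F" and G: "finite G"
  shows "((\<lambda>k. cinner (bop_apply R (gram_slice G x b k)) (gram_slice F y a k)) has_sum
      (\<Sum>i\<in>F. \<Sum>j\<in>G. bop_matrix R i j * cinner (b j) (a i) * x j * cnj (y i))) UNIV"
proof -
  define h where "h i j k = bop_matrix R i j * x j * cnj (y i) * (Rep_ell2 (b j) k * cnj (Rep_ell2 (a i) k))" for i j k
  have slices: "cinner (bop_apply R (gram_slice G x b k)) (gram_slice F y a k) = (\<Sum>i\<in>F. \<Sum>j\<in>G. h i j k)" for k
  proof -
    have "bop_apply R (gram_slice G x b k) = (\<Sum>j\<in>G. (x j * Rep_ell2 (b j) k) *\<^sub>C bop_apply R (ket j))"
      unfolding gram_slice_def
        by (simp add: linear_sum[OF bounded_linear.linear[OF bounded_linear_bop_apply]])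
    thus ?thesis
      by (simp add: gram_slice_def h_def bop_matrix_def cinner_sum_right Rep_ell2_sum sum_distrib_left
          sum_distrib_right mult_ac)
  qed
  have "((\<lambda>k. h i j k) has_sum (bop_matrix R i j * cinner (b j) (a i) * x j * cnj (y i))) UNIV" for i j
  proof -
    have "((\<lambda>k. Rep_ell2 (b j) k * cnj (Rep_ell2 (a i) k)) has_sum cinner (b j) (a i)) UNIV"
      unfolding cinner.rep_eq l2inner_def by (rule has_sum_infsum, rule l2_inner_summable) simp_all
    from has_sum_cmult_right[OF this, of "bop_matrix R i j * x j * cnj (y i)"]
    show ?thesis by (simp add: h_def mult_ac)
  qed
  thus ?thesis unfolding slices by (intro has_sum_sum F G)
qed

lemma sqrt_weighted_sum_le:
  assumes "\<And>j. (norm (b j))\<^sup>2 \<le> \<beta>"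
  shows "sqrt (\<Sum>j\<in>G. (cmod (x j))\<^sup>2 * (norm (b j))\<^sup>2) \<le> sqrt \<beta> * sqrt (\<Sum>j\<in>G. (cmod (x j))\<^sup>2)"
proof -
  have "(\<Sum>j\<in>G. (cmod (x j))\<^sup>2 * (norm (b j))\<^sup>2) \<le> (\<Sum>j\<in>G. \<beta> * (cmod (x j))\<^sup>2)"
    by (intro sum_mono) (metis assms mult.commute mult_right_mono zero_le_power2)
  also have "\<dots> = \<beta> * (\<Sum>j\<in>G. (cmod (x j))\<^sup>2)"
    by (rule sum_distrib_left[symmetric])
  finally show ?thesis unfolding real_sqrt_mult[symmetric] by (rule real_sqrt_le_mono)
qed

lemma schur_gram_bilinear_bound:
  fixes a b :: "'x \<Rightarrow> 'x ell2" and R :: "'x bop" and x y :: "'x \<Rightarrow> complex"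
  assumes na: "\<And>i. (norm (a i))\<^sup>2 \<le> \<alpha>" and nb: "\<And>j. (norm (b j))\<^sup>2 \<le> \<beta>"
    and nR: "norm R \<le> 1" and F: "finite F" and G: "finite G"
  shows "cmod (\<Sum>i\<in>F. \<Sum>j\<in>G. bop_matrix R i j * cinner (b j) (a i) * x j * cnj (y i))
     \<le> sqrt \<alpha> * sqrt \<beta> * sqrt (\<Sum>j\<in>G. (cmod (x j))\<^sup>2) * sqrt (\<Sum>i\<in>F. (cmod (y i))\<^sup>2)"
proof -
  define s where "s k = gram_slice G x b k" for k
  define t where "t k = gram_slice F y a k" for k
  have hs: "((\<lambda>k. (norm (s k))\<^sup>2) has_sum (\<Sum>j\<in>G. (cmod (x j))\<^sup>2 * (norm (b j))\<^sup>2)) UNIV"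
    unfolding s_def by (rule has_sum_norm_gram_slice_sq[OF G])
  have ht: "((\<lambda>k. (norm (t k))\<^sup>2) has_sum (\<Sum>i\<in>F. (cmod (y i))\<^sup>2 * (norm (a i))\<^sup>2)) UNIV"
    unfolding t_def by (rule has_sum_norm_gram_slice_sq[OF F])
  have cs: "(\<lambda>k. norm (s k) * norm (t k)) summable_on UNIV"
    "infsum (\<lambda>k. norm (s k) * norm (t k)) UNIV
       \<le> sqrt (infsum (\<lambda>k. (norm (s k))\<^sup>2) UNIV) * sqrt (infsum (\<lambda>k. (norm (t k))\<^sup>2) UNIV)"
    using l2_cauchy_schwarz[of "\<lambda>k. norm (s k)" "\<lambda>k. norm (t k)"] hs ht
    by (auto dest: has_sum_imp_summable)
  have pointwise: "cmod (cinner (bop_apply R (s k)) (t k)) \<le> norm (s k) * norm (t k)" for k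
  proof -
    have "cmod (cinner (bop_apply R (s k)) (t k)) \<le> norm (bop_apply R (s k)) * norm (t k)"
      by (rule cinner_cauchy_schwarz)
    also have "\<dots> \<le> norm R * norm (s k) * norm (t k)"
      by (intro mult_right_mono norm_bop_apply) simp
    also have "\<dots> \<le> norm (s k) * norm (t k)"
      using nR by (simp add: mult_left_le_one_le mult.assoc)
    finally show ?thesis .
  qed
  hence summable: "(\<lambda>k. cmod (cinner (bop_apply R (s k)) (t k))) summable_on UNIV"
    by (intro summable_on_comparison_test[OF cs(1)]) auto
  have "cmod (\<Sum>i\<in>F. \<Sum>j\<in>G. bop_matrix R i j * cinner (b j) (a i) * x j * cnj (y i))
      = cmod (infsum (\<lambda>k. cinner (bop_apply R (s k)) (t k)) UNIV)"
    using infsumI[OF has_sum_cinner_gram_slices[OF F G, of R x b y a]] by (simp add: s_def t_def)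
  also have "\<dots> \<le> infsum (\<lambda>k. cmod (cinner (bop_apply R (s k)) (t k))) UNIV"
    using summable by (rule norm_infsum_bound)
  also have "\<dots> \<le> infsum (\<lambda>k. norm (s k) * norm (t k)) UNIV"
    using summable cs(1) pointwise by (rule infsum_mono)
  also have "\<dots> \<le> sqrt (\<Sum>j\<in>G. (cmod (x j))\<^sup>2 * (norm (b j))\<^sup>2) * sqrt (\<Sum>i\<in>F. (cmod (y i))\<^sup>2 * (norm (a i))\<^sup>2)"
    using cs(2) by (simp add: infsumI[OF hs] infsumI[OF ht])
  also have "\<dots> \<le> (sqrt \<beta> * sqrt (\<Sum>j\<in>G. (cmod (x j))\<^sup>2)) * (sqrt \<alpha> * sqrt (\<Sum>i\<in>F. (cmod (y i))\<^sup>2))"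
    using order_trans[OF zero_le_power2 nb[of undefined]]
    by (intro mult_mono sqrt_weighted_sum_le na nb) (auto simp: sum_nonneg)
  finally show ?thesis by (simp add: mult_ac)
qed

lemma bilinear_bounded_mat_finite_rows:
  fixes m :: "'x mat" and C :: real
  assumes rows: "\<And>i. (\<lambda>j. m i j * v j) summable_on UNIV" and v: "v \<in> l2" and C: "C \<ge> 0"
    and fb: "\<And>G y. finite G \<Longrightarrow> cmod (\<Sum>i\<in>F. \<Sum>j\<in>G. m i j * v j * cnj (y i))
        \<le> C * sqrt (\<Sum>j\<in>G. (cmod (v j))\<^sup>2) * sqrt (\<Sum>i\<in>F. (cmod (y i))\<^sup>2)"
    and F: "finite F"
  shows "(\<Sum>i\<in>F. (cmod (mat_apply m v i))\<^sup>2) \<le> (C * l2norm v)\<^sup>2"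
proof -
  define z where "z = mat_apply m v"
  define S where "S = (\<Sum>i\<in>F. (cmod (z i))\<^sup>2)"
  have S0: "S \<ge> 0" by (simp add: S_def sum_nonneg)
  have lim: "((\<lambda>G. \<Sum>i\<in>F. \<Sum>j\<in>G. m i j * v j * cnj (z i)) \<longlongrightarrow> (\<Sum>i\<in>F. z i * cnj (z i)))
      (finite_subsets_at_top UNIV)"
  proof (intro tendsto_sum)
    fix i
    have "((\<lambda>G. \<Sum>j\<in>G. m i j * v j) \<longlongrightarrow> z i) (finite_subsets_at_top UNIV)"
      using has_sum_infsum[OF rows[of i]] by (simp add: has_sum_def z_def mat_apply_def)
    thus "((\<lambda>G. \<Sum>j\<in>G. m i j * v j * cnj (z i)) \<longlongrightarrow> z i * cnj (z i)) (finite_subsets_at_top UNIV)"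
      by (simp add: sum_distrib_right[symmetric] tendsto_mult_right)
  qed
  have "cmod (\<Sum>i\<in>F. z i * cnj (z i)) \<le> C * l2norm v * sqrt S"
  proof (rule tendsto_le[OF finite_subsets_at_top_neq_bot _ tendsto_norm[OF lim]])
    have "norm (\<Sum>i\<in>F. \<Sum>j\<in>G. m i j * v j * cnj (z i)) \<le> C * l2norm v * sqrt S" if G: "finite G" for G
    proof -
      have "sqrt (\<Sum>j\<in>G. (cmod (v j))\<^sup>2) \<le> l2norm v"
        unfolding l2norm_def using v G
        by (intro real_sqrt_le_mono sum_le_infsum_nonneg) (auto simp: l2_def)
      hence "C * sqrt (\<Sum>j\<in>G. (cmod (v j))\<^sup>2) * sqrt S \<le> C * l2norm v * sqrt S"
        using C S0 by (intro mult_right_mono mult_left_mono) auto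
      with fb[OF G, of z] show ?thesis unfolding S_def by linarith
    qed
    thus "\<forall>\<^sub>F G in finite_subsets_at_top UNIV. norm (\<Sum>i\<in>F. \<Sum>j\<in>G. m i j * v j * cnj (z i)) \<le> C * l2norm v * sqrt S"
      by (rule eventually_finite_subsets_at_top_weakI)
  qed simp
  moreover have "(\<Sum>i\<in>F. z i * cnj (z i)) = complex_of_real S"
    by (simp add: S_def mult_cnj_self)
  ultimately have "S \<le> C * l2norm v * sqrt S" using S0 by simp
  hence "S \<le> (C * l2norm v)\<^sup>2"
    using S0 C l2norm_nonneg[of v] by (intro le_square_if_le_mult_sqrt) auto
  thus ?thesis by (simp add: S_def z_def)
qed

lemma bilinear_bounded_mat:
  fixes m :: "'x mat" and C :: real
  assumes rows: "\<And>v i. v \<in> l2 \<Longrightarrow> (\<lambda>j. m i j * v j) summable_on UNIV"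
    and C: "C \<ge> 0"
    and fb: "\<And>F G x y. finite F \<Longrightarrow> finite G \<Longrightarrow>
      cmod (\<Sum>i\<in>F. \<Sum>j\<in>G. m i j * x j * cnj (y i))
        \<le> C * sqrt (\<Sum>j\<in>G. (cmod (x j))\<^sup>2) * sqrt (\<Sum>i\<in>F. (cmod (y i))\<^sup>2)"
  shows "bounded_mat m" "norm (matrix_bop m) \<le> C"
proof -
  have main: "mat_apply m v \<in> l2 \<and> l2norm (mat_apply m v) \<le> C * l2norm v" if v: "v \<in> l2" for v
  proof -
    have bnd: "(\<Sum>i\<in>F. (cmod (mat_apply m v i))\<^sup>2) \<le> (C * l2norm v)\<^sup>2" if "finite F" for F
      by (rule bilinear_bounded_mat_finite_rows[OF rows[OF v] v C fb[OF that] that])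
    have "infsum (\<lambda>i. (cmod (mat_apply m v i))\<^sup>2) UNIV \<le> (C * l2norm v)\<^sup>2"
      using bnd by (rule l2_of_finite_sums_bounded)
    from real_sqrt_le_mono[OF this] have "l2norm (mat_apply m v) \<le> C * l2norm v"
      using C l2norm_nonneg[of v] by (simp add: l2norm_def[of "mat_apply m v"])
    moreover have "mat_apply m v \<in> l2" using bnd by (rule l2_of_finite_sums_bounded(1))
    ultimately show ?thesis by blast
  qed
  show bm: "bounded_mat m" unfolding bounded_mat_def using rows main by blast
  show "norm (matrix_bop m) \<le> C"
  proof (rule norm_bop_bound[OF C])
    fix x
    have "norm (bop_apply (matrix_bop m) x) = l2norm (mat_apply m (Rep_ell2 x))"
      by (simp add: l2norm_Rep_ell2[symmetric] Rep_ell2_bop_apply_matrix_bop[OF bm])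
    also have "\<dots> \<le> C * norm x" using main[of "Rep_ell2 x"] by (simp add: l2norm_Rep_ell2)
    finally show "norm (bop_apply (matrix_bop m) x) \<le> C * norm x" .
  qed
qed

lemma schur_prod_rows_summable:
  assumes r: "bounded_mat r" and t: "\<And>i j. cmod (t i j) \<le> c" and v: "v \<in> l2"
  shows "(\<lambda>j. schur_prod t r i j * v j) summable_on UNIV"
proof -
  have "(\<lambda>j. cmod (r i j * v j)) summable_on UNIV"
    using r v by (auto simp: bounded_mat_def summable_on_iff_abs_summable_on_complex)
  hence "(\<lambda>j. c * cmod (r i j * v j)) summable_on UNIV"
    by (rule summable_on_cmult_right)
  moreover have "cmod (schur_prod t r i j * v j) \<le> c * cmod (r i j * v j)" for j
  proof -
    have "cmod (t i j) * cmod (r i j * v j) \<le> c * cmod (r i j * v j)"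
      by (rule mult_right_mono[OF t]) simp
    thus ?thesis by (simp add: schur_prod_def norm_mult mult.assoc)
  qed
  ultimately have "(\<lambda>j. cmod (schur_prod t r i j * v j)) summable_on UNIV"
    by (rule summable_on_comparison_test) simp
  thus ?thesis by (simp add: summable_on_iff_abs_summable_on_complex)
qed

lemma schur_gram:
  fixes a b :: "'x \<Rightarrow> 'x ell2" and t r :: "'x mat"
  assumes t: "\<And>i j. t i j = cinner (b j) (a i)"
    and na: "\<And>i. (norm (a i))\<^sup>2 \<le> \<alpha>" and nb: "\<And>j. (norm (b j))\<^sup>2 \<le> \<beta>"
    and r: "bounded_mat r" "norm (matrix_bop r) \<le> 1"
  shows "bounded_mat (schur_prod t r)" "norm (matrix_bop (schur_prod t r)) \<le> sqrt \<alpha> * sqrt \<beta>"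
proof -
  have nai: "norm (a i) \<le> sqrt \<alpha>" for i using real_sqrt_le_mono[OF na[of i]] by simp
  have nbj: "norm (b j) \<le> sqrt \<beta>" for j using real_sqrt_le_mono[OF nb[of j]] by simp
  have tb: "cmod (t i j) \<le> sqrt \<alpha> * sqrt \<beta>" for i j
  proof -
    have "cmod (t i j) \<le> norm (b j) * norm (a i)" unfolding t by (rule cinner_cauchy_schwarz)
    also have "\<dots> \<le> sqrt \<beta> * sqrt \<alpha>"
      by (intro mult_mono nai nbj norm_ge_zero order_trans[OF norm_ge_zero nbj])
    finally show ?thesis by (simp add: mult.commute)
  qed
  have bilinear: "cmod (\<Sum>i\<in>F. \<Sum>j\<in>G. schur_prod t r i j * x j * cnj (y i))
        \<le> sqrt \<alpha> * sqrt \<beta> * sqrt (\<Sum>j\<in>G. (cmod (x j))\<^sup>2) * sqrt (\<Sum>i\<in>F. (cmod (y i))\<^sup>2)"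
    if "finite F" "finite G" for F G :: "'x set" and x y :: "'x \<Rightarrow> complex"
    using schur_gram_bilinear_bound[OF na nb r(2) that, where x = x and y = y]
    by (simp add: schur_prod_def t bop_matrix_matrix_bop[OF r(1)] mult_ac)
  show "bounded_mat (schur_prod t r)" "norm (matrix_bop (schur_prod t r)) \<le> sqrt \<alpha> * sqrt \<beta>"
    by (rule bilinear_bounded_mat[OF schur_prod_rows_summable[OF r(1) tb] _ bilinear];
        use order_trans[OF norm_ge_zero tb] in simp)+
qed

lemma cinner_Rep_ell2: "l2inner (Rep_ell2 x) (Rep_ell2 y) = cinner x y"
  by (simp add: cinner.rep_eq)

lemma positive_mat_iff: "positive_mat s \<longleftrightarrow> bounded_mat s \<and> positive_op (matrix_bop s)"
proof (cases "bounded_mat s")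
  case True
  have "(\<forall>v\<in>l2. l2inner (mat_apply s v) v \<in> \<real> \<and> 0 \<le> Re (l2inner (mat_apply s v) v)) \<longleftrightarrow> positive_op (matrix_bop s)"
  proof
    assume h: "\<forall>v\<in>l2. l2inner (mat_apply s v) v \<in> \<real> \<and> 0 \<le> Re (l2inner (mat_apply s v) v)"
    show "positive_op (matrix_bop s)" unfolding positive_op_def
    proof (intro allI)
      fix x
      have "l2inner (mat_apply s (Rep_ell2 x)) (Rep_ell2 x) = cinner (bop_apply (matrix_bop s) x) x"
        by (simp add: Rep_ell2_bop_apply_matrix_bop[OF True, symmetric] cinner_Rep_ell2)
      thus "cinner (bop_apply (matrix_bop s) x) x \<in> \<real> \<and> 0 \<le> Re (cinner (bop_apply (matrix_bop s) x) x)"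
        using h Rep_ell2_l2[of x] by metis
    qed
  next
    assume p: "positive_op (matrix_bop s)"
    show "\<forall>v\<in>l2. l2inner (mat_apply s v) v \<in> \<real> \<and> 0 \<le> Re (l2inner (mat_apply s v) v)"
    proof
      fix v :: "'a \<Rightarrow> complex" assume v: "v \<in> l2"
      have e: "l2inner (mat_apply s v) v = cinner (bop_apply (matrix_bop s) (Abs_ell2 v)) (Abs_ell2 v)"
        by (simp add: cinner.rep_eq Rep_ell2_bop_apply_matrix_bop[OF True] Rep_ell2_Abs v)
      show "l2inner (mat_apply s v) v \<in> \<real> \<and> 0 \<le> Re (l2inner (mat_apply s v) v)"
        using p unfolding e positive_op_def by blast
    qed
  qed
  thus ?thesis using True by (simp add: positive_mat_def)
qed (simp add: positive_mat_def)

lemma mat_abs_bop_matrix: "mat_abs (bop_matrix A) = bop_matrix (bop_abs A)"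
proof -
  have e: "mat_mult (adjoint (bop_matrix A)) (bop_matrix A) = bop_matrix (adj A * A)"
    by (simp add: bop_matrix_adj[symmetric] mat_mult_bop_matrix)
  show ?thesis unfolding mat_abs_def e
  proof (rule the_equality)
    show "positive_mat (bop_matrix (bop_abs A)) \<and> mat_mult (bop_matrix (bop_abs A)) (bop_matrix (bop_abs A)) = bop_matrix (adj A * A)"
      by (simp add: positive_mat_iff bounded_bop_matrix mat_mult_bop_matrix positive_bop_abs bop_abs_square)
  next
    fix s assume h: "positive_mat s \<and> mat_mult s s = bop_matrix (adj A * A)"
    hence b: "bounded_mat s" and p: "positive_op (matrix_bop s)" by (auto simp: positive_mat_iff)
    have "bop_matrix (matrix_bop s * matrix_bop s) = bop_matrix (adj A * A)"
      using h b by (simp add: mat_mult_matrix_bop)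
    hence "matrix_bop s = bop_abs A"
      unfolding bop_abs_def
        by (intro bop_sqrt_unique positive_op_adj_mult p) (simp add: bop_matrix_inject)
    thus "s = bop_matrix (bop_abs A)" using bop_matrix_matrix_bop[OF b] by simp
  qed
qed

lemma diag_bounded: "bounded_mat (diag_part (bop_matrix A))"
proof -
  define d where "d i = bop_matrix A i i" for i
  have dle: "cmod (d i) \<le> norm A" for i
  proof -
    have "cmod (d i) \<le> norm (bop_apply A (ket i))"
      unfolding d_def bop_matrix_def by (rule coord_le_norm)
    also have "\<dots> \<le> norm A" using norm_bop_apply[of A "ket i"] by simp
    finally show ?thesis .
  qed
  have row: "((\<lambda>j. diag_part (bop_matrix A) i j * v j) has_sum (d i * v i)) UNIV" for i and v :: "'a \<Rightarrow> complex"
  proof -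
    have "((\<lambda>j. diag_part (bop_matrix A) i j * v j) has_sum (\<Sum>j\<in>{i}. diag_part (bop_matrix A) i j * v j)) UNIV"
      by (rule has_sum_finite_neutralI[of "{i}"]) (auto simp: diag_part_def)
    thus ?thesis by (simp add: diag_part_def d_def)
  qed
  have ma: "mat_apply (diag_part (bop_matrix A)) v = (\<lambda>i. d i * v i)" for v
    using row by (auto simp: mat_apply_def intro!: ext infsumI)
  show ?thesis unfolding bounded_mat_def
  proof (intro exI[of _ "norm A"] ballI conjI allI)
    fix v :: "'a \<Rightarrow> complex" and i assume v: "v \<in> l2"
    show "(\<lambda>j. diag_part (bop_matrix A) i j * v j) summable_on UNIV"
      using row by (rule has_sum_imp_summable)
    have vs: "(\<lambda>j. (cmod (v j))\<^sup>2) summable_on UNIV" using v by (simp add: l2_def)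
    have b: "(\<Sum>i\<in>F. (cmod (d i * v i))\<^sup>2) \<le> (norm A)\<^sup>2 * infsum (\<lambda>j. (cmod (v j))\<^sup>2) UNIV"
      if "finite F" for F
    proof -
      have "(\<Sum>i\<in>F. (cmod (d i * v i))\<^sup>2) \<le> (\<Sum>i\<in>F. (norm A)\<^sup>2 * (cmod (v i))\<^sup>2)"
        by (intro sum_mono) (auto simp: norm_mult power_mult_distrib intro!: mult_right_mono power_mono dle)
      also have "\<dots> = (norm A)\<^sup>2 * (\<Sum>i\<in>F. (cmod (v i))\<^sup>2)"
        by (simp add: sum_distrib_left)
      also have "\<dots> \<le> (norm A)\<^sup>2 * infsum (\<lambda>j. (cmod (v j))\<^sup>2) UNIV"
        by (intro mult_left_mono sum_le_infsum_nonneg[OF vs] that) auto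
      finally show ?thesis .
    qed
    show "mat_apply (diag_part (bop_matrix A)) v \<in> l2"
      unfolding ma using b by (rule l2_of_finite_sums_bounded)
    have "infsum (\<lambda>i. (cmod (d i * v i))\<^sup>2) UNIV \<le> (norm A)\<^sup>2 * infsum (\<lambda>j. (cmod (v j))\<^sup>2) UNIV"
      using b by (rule l2_of_finite_sums_bounded)
    from real_sqrt_le_mono[OF this]
    show "l2norm (mat_apply (diag_part (bop_matrix A)) v) \<le> norm A * l2norm v"
      by (simp add: ma l2norm_def real_sqrt_mult)
  qed
qed

definition diag_norm :: "'x bop \<Rightarrow> real" where
  "diag_norm A = norm (matrix_bop (diag_part (bop_matrix A)))"

lemma opnorm_diag_part: "opnorm (diag_part (bop_matrix A)) = ennreal (diag_norm A)"
  unfolding diag_norm_def by (rule opnorm_matrix_bop[OF diag_bounded])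

lemma diag_entry_le_diag_norm: "cmod (Rep_ell2 (bop_apply A (ket i)) i) \<le> diag_norm A"
proof -
  have b: "bounded_mat (diag_part (bop_matrix A))" by (rule diag_bounded)
  have "Rep_ell2 (bop_apply A (ket i)) i = Rep_ell2 (bop_apply (matrix_bop (diag_part (bop_matrix A))) (ket i)) i"
    unfolding Rep_ell2_bop_apply_matrix_bop[OF b] mat_apply_ket
      by (simp add: diag_part_def bop_matrix_def)
  also have "cmod \<dots> \<le> norm (bop_apply (matrix_bop (diag_part (bop_matrix A))) (ket i))"
    by (rule coord_le_norm)
  also have "\<dots> \<le> diag_norm A" using norm_bop_apply[of _ "ket i"] by (simp add: diag_norm_def)
  finally show ?thesis .
qed

lemma quad_form_ket_le_diag_norm: "quad_form A (ket i) \<le> diag_norm A"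
  using complex_Re_le_cmod diag_entry_le_diag_norm order_trans by (fastforce simp: quad_form_def)

lemma norm_adj_apply_sq: "(norm (bop_apply (adj G) x))\<^sup>2 = quad_form (G * adj G) x"
  by (simp add: quad_form_def cinner_adj_right cinner_self)

lemma bop_matrix_mult_cinner:
  "bop_matrix (G * K) i j = cinner (bop_apply K (ket j)) (bop_apply (adj G) (ket i))"
proof -
  have "bop_matrix (G * K) i j = cinner (bop_apply G (bop_apply K (ket j))) (ket i)"
    by (simp add: bop_matrix_def)
  also have "\<dots> = cinner (bop_apply K (ket j)) (bop_apply (adj G) (ket i))"
    by (rule cinner_adj_right)
  finally show ?thesis .
qed

lemma schur_one: "schur_prod t (bop_matrix 1) = diag_part t"
  by (auto simp: schur_prod_def bop_matrix_def diag_part_def Rep_ell2_ket intro!: ext)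

lemma schur_norm_ge_diag: "opnorm (diag_part t) \<le> schur_norm t"
proof -
  have "opnorm (schur_prod t (bop_matrix 1)) \<in> {opnorm (schur_prod t r) | r. bounded_mat r \<and> opnorm r \<le> 1}"
    by (auto simp: bounded_bop_matrix opnorm_bop_matrix intro!: exI[of _ "bop_matrix 1"])
  hence "opnorm (schur_prod t (bop_matrix 1)) \<le> schur_norm t"
    unfolding schur_norm_def by (rule Sup_upper)
  thus ?thesis by (simp add: schur_one)
qed

lemma schur_norm_le:
  assumes "\<And>r. bounded_mat r \<Longrightarrow> norm (matrix_bop r) \<le> 1 \<Longrightarrow>
     bounded_mat (schur_prod t r) \<and> norm (matrix_bop (schur_prod t r)) \<le> C"
  shows "schur_norm t \<le> ennreal C"
  unfolding schur_norm_def
proof (rule Sup_least)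
  fix y assume "y \<in> {opnorm (schur_prod t r) | r. bounded_mat r \<and> opnorm r \<le> 1}"
  then obtain r where r: "bounded_mat r" "opnorm r \<le> 1" and y: "y = opnorm (schur_prod t r)" by auto
  have "norm (matrix_bop r) \<le> 1" using r by (simp add: opnorm_matrix_bop)
  from assms[OF r(1) this] show "y \<le> ennreal C"
    by (simp add: y opnorm_matrix_bop ennreal_leI)
qed

lemma schur_norm_gram_le:
  fixes a b :: "'x \<Rightarrow> 'x ell2"
  assumes "\<And>i j. t i j = cinner (b j) (a i)"
    and "\<And>i. (norm (a i))\<^sup>2 \<le> \<alpha>" and "\<And>j. (norm (b j))\<^sup>2 \<le> \<beta>"
  shows "schur_norm t \<le> ennreal (sqrt \<alpha> * sqrt \<beta>)"
  by (rule schur_norm_le) (simp add: schur_gram[OF assms])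

lemma schur_norm_positive:
  assumes S: "positive_op S"
  shows "schur_norm (bop_matrix S) = ennreal (diag_norm S)"
proof (rule antisym)
  define K where "K = bop_sqrt S"
  have K: "adj K = K" "K * K = S"
    unfolding K_def using bop_sqrt_spec[OF S] positive_op_selfadj by auto
  have "bop_matrix S i j = cinner (bop_apply K (ket j)) (bop_apply (adj K) (ket i))" for i j
    using bop_matrix_mult_cinner[of K K] by (simp add: K(2))
  moreover have "(norm (bop_apply (adj K) (ket i)))\<^sup>2 \<le> diag_norm S" for i
    using norm_adj_apply_sq[of K "ket i"] quad_form_ket_le_diag_norm[of S i] by (simp add: K)
  moreover have "(norm (bop_apply K (ket j)))\<^sup>2 \<le> diag_norm S" for j
    using norm_adj_apply_sq[of K "ket j"] quad_form_ket_le_diag_norm[of S j] by (simp add: K)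
  ultimately have "schur_norm (bop_matrix S) \<le> ennreal (sqrt (diag_norm S) * sqrt (diag_norm S))"
    by (rule schur_norm_gram_le)
  thus "schur_norm (bop_matrix S) \<le> ennreal (diag_norm S)"
    by (simp add: diag_norm_def)
  show "ennreal (diag_norm S) \<le> schur_norm (bop_matrix S)"
    using schur_norm_ge_diag[of "bop_matrix S"] by (simp add: opnorm_diag_part)
qed

section \<open>The estimate for general operators\<close>

lemma quad_form_resolvent_le:
  assumes Q: "positive_op Q" and e: "e > 0"
    and Ni: "(Q + e *\<^sub>R 1) * Ni = 1" "Ni * (Q + e *\<^sub>R 1) = 1"
  shows "quad_form (Ni * (Q * Q)) x \<le> quad_form Q x"
proof -
  define u where "u = bop_apply Ni x"
  have "bop_apply ((Q + e *\<^sub>R 1) * Ni) x = x" by (simp only: Ni(1) bop_apply_simps(2))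
  hence x: "x = bop_apply Q u + e *\<^sub>R u" by (simp add: u_def)
  have "Q * Ni = Ni * Q"
    by (rule commute_inverse[OF _ Ni]) (simp add: algebra_simps)
  hence "bop_apply (Ni * Q) x = bop_apply Q u" by (metis bop_apply_simps(7) u_def)
  hence "quad_form (Ni * Q) x = (norm (bop_apply Q u))\<^sup>2 + e * quad_form Q u"
    by (simp add: quad_form_def x cinner_add_right cinner_self)
  hence "0 \<le> quad_form (Ni * Q) x"
    using positive_op_quad_form_nonneg[OF Q, of u] e by simp
  moreover have "Ni * (Q * Q) = Q - e *\<^sub>R (Ni * Q)"
  proof -
    have "Ni * (Q * Q) = (Ni * (Q + e *\<^sub>R 1)) * Q - e *\<^sub>R (Ni * Q)"
      by (simp add: algebra_simps)
    thus ?thesis by (simp add: Ni(2))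
  qed
  ultimately show ?thesis using e by (simp add: quad_form_simps)
qed

text \<open>G = A K^(-1) is written as A (|A| + e)^(-1) K.\<close>

lemma shifted_abs_factorization:
  assumes e: "e > 0"
  obtains K G where "positive_op K" "K * K = bop_abs A + e *\<^sub>R 1" "G * K = A"
    "\<And>x. quad_form (G * adj G) x \<le> quad_form (bop_abs (adj A)) x"
proof -
  define P where "P = bop_abs A"
  define Q where "Q = bop_abs (adj A)"
  have P: "positive_op P" and Q: "positive_op Q" by (simp_all add: P_def Q_def positive_bop_abs)
  obtain Mi where Mi: "(P + e *\<^sub>R 1) * Mi = 1" "Mi * (P + e *\<^sub>R 1) = 1"
    by (rule positive_op_shift_invertible[OF P e])
  obtain Ni where Ni: "(Q + e *\<^sub>R 1) * Ni = 1" "Ni * (Q + e *\<^sub>R 1) = 1"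
    by (rule positive_op_shift_invertible[OF Q e])
  have AM: "A * (P + e *\<^sub>R 1) = (Q + e *\<^sub>R 1) * A"
    by (simp add: P_def Q_def algebra_simps bop_abs_intertwine)
  have NiA: "Ni * A = A * Mi"
  proof -
    have "Ni * A = Ni * (A * (P + e *\<^sub>R 1)) * Mi" by (simp add: Mi mult.assoc)
    also have "\<dots> = (Ni * (Q + e *\<^sub>R 1)) * A * Mi" by (simp only: AM mult.assoc)
    also have "\<dots> = A * Mi" by (simp add: Ni)
    finally show ?thesis .
  qed
  define K where "K = bop_sqrt (P + e *\<^sub>R 1)"
  have Mp: "positive_op (P + e *\<^sub>R 1)"
    using e by (intro positive_op_add P positive_op_scaleR positive_op_one) auto
  have K: "positive_op K" "K * K = P + e *\<^sub>R 1" unfolding K_def by (rule bop_sqrt_spec[OF Mp])+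
  have aMi: "adj Mi = Mi" by (rule selfadj_inverse[OF positive_op_selfadj[OF Mp] Mi])
  define G where "G = A * Mi * K"
  show ?thesis
  proof
    show "positive_op K" "K * K = bop_abs A + e *\<^sub>R 1" using K by (simp_all add: P_def)
    show "G * K = A" by (simp add: G_def mult.assoc K(2) Mi)
    have "G * adj G = A * Mi * (K * K) * Mi * adj A"
      by (simp add: G_def adj_mult aMi positive_op_selfadj[OF K(1)] mult.assoc)
    also have "\<dots> = A * (Mi * (P + e *\<^sub>R 1)) * Mi * adj A" by (simp only: K(2) mult.assoc)
    also have "\<dots> = (Ni * A) * adj A" by (simp add: Mi NiA)
    also have "\<dots> = Ni * (Q * Q)" by (simp add: Q_def bop_abs_square mult.assoc)
    finally show "quad_form (G * adj G) x \<le> quad_form (bop_abs (adj A)) x" for x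
      using quad_form_resolvent_le[OF Q e Ni] by (simp add: Q_def)
  qed
qed

lemma schur_norm_le_eps:
  assumes "e > 0"
  shows "schur_norm (bop_matrix A) \<le> ennreal (sqrt (diag_norm (bop_abs (adj A))) * sqrt (diag_norm (bop_abs A) + e))"
proof -
  obtain K G where K: "positive_op K" "K * K = bop_abs A + e *\<^sub>R 1" and G: "G * K = A"
    and GG: "\<And>x. quad_form (G * adj G) x \<le> quad_form (bop_abs (adj A)) x"
    using shifted_abs_factorization[OF assms, where A = A] by blast
  have "bop_matrix A i j = cinner (bop_apply K (ket j)) (bop_apply (adj G) (ket i))" for i j
    using bop_matrix_mult_cinner[of G K] by (simp add: G)
  moreover have "(norm (bop_apply (adj G) (ket i)))\<^sup>2 \<le> diag_norm (bop_abs (adj A))" for i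
    using GG[of "ket i"] quad_form_ket_le_diag_norm[of "bop_abs (adj A)" i]
      by (simp add: norm_adj_apply_sq)
  moreover have "(norm (bop_apply K (ket j)))\<^sup>2 \<le> diag_norm (bop_abs A) + e" for j
    using norm_adj_apply_sq[of K "ket j"] quad_form_ket_le_diag_norm[of "bop_abs A" j]
    by (simp add: positive_op_selfadj[OF K(1)] K(2) quad_form_simps)
  ultimately show ?thesis by (rule schur_norm_gram_le)
qed

lemma ennreal_le_sqrt_mult_if_le_eps:
  fixes x :: ennreal and a b :: real
  assumes "\<And>e. e > 0 \<Longrightarrow> x \<le> ennreal (sqrt a * sqrt (b + e))"
  shows "x \<le> ennreal (sqrt a * sqrt b)"
proof (rule tendsto_le[OF trivial_limit_sequentially])
  have "(\<lambda>n. b + inverse (real (Suc n))) \<longlonglongrightarrow> b + 0"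
    by (intro tendsto_intros LIMSEQ_inverse_real_of_nat)
  thus "(\<lambda>n. ennreal (sqrt a * sqrt (b + inverse (real (Suc n))))) \<longlonglongrightarrow> ennreal (sqrt a * sqrt b)"
    by (intro tendsto_intros) simp
  show "\<forall>\<^sub>F n in sequentially. x \<le> ennreal (sqrt a * sqrt (b + inverse (real (Suc n))))"
    by (intro always_eventually allI assms) simp
qed simp

lemma ennsqrt_ennreal: "0 \<le> x \<Longrightarrow> ennsqrt (ennreal x) = ennreal (sqrt x)"
  by (simp add: ennsqrt_def)

theorem proposition4p1:
  fixes T :: "'x mat"
  assumes "bounded_mat T"
  shows "schur_norm T \<le> ennsqrt (opnorm (diag_part (mat_abs (adjoint T))))
                        * ennsqrt (opnorm (diag_part (mat_abs T)))
     \<and> ennsqrt (opnorm (diag_part (mat_abs (adjoint T)))) * ennsqrt (opnorm (diag_part (mat_abs T)))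
       = ennsqrt (schur_norm (mat_abs (adjoint T))) * ennsqrt (schur_norm (mat_abs T))"
proof -
  define A where "A = matrix_bop T"
  have T: "T = bop_matrix A" by (simp add: A_def bop_matrix_matrix_bop[OF assms])
  define dP where "dP = diag_norm (bop_abs A)"
  define dQ where "dQ = diag_norm (bop_abs (adj A))"
  have abs: "mat_abs T = bop_matrix (bop_abs A)" "mat_abs (adjoint T) = bop_matrix (bop_abs (adj A))"
    by (simp_all add: T mat_abs_bop_matrix flip: bop_matrix_adj)
  have diag: "opnorm (diag_part (mat_abs T)) = ennreal dP" "opnorm (diag_part (mat_abs (adjoint T))) = ennreal dQ"
    by (simp_all add: abs dP_def dQ_def opnorm_diag_part)
  have schur: "schur_norm (mat_abs T) = ennreal dP" "schur_norm (mat_abs (adjoint T)) = ennreal dQ"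
    by (simp_all add: abs dP_def dQ_def schur_norm_positive positive_bop_abs)
  have "schur_norm T \<le> ennreal (sqrt dQ * sqrt dP)"
    unfolding T dP_def dQ_def by (rule ennreal_le_sqrt_mult_if_le_eps) (rule schur_norm_le_eps)
  moreover have "0 \<le> dP" "0 \<le> dQ" by (simp_all add: dP_def dQ_def diag_norm_def)
  ultimately show ?thesis
    by (simp add: diag schur ennsqrt_ennreal ennreal_mult)
qed

end
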